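(* Consider a stationary $K$-armed bandit ($M=1$: each arm $k$ has a fixed reward distribution on $[0,1]$ with mean $\mu_k$, rewards independent across arms and time) with horizon $T$, and run the M-UCB algorithm with any parameters $w$ (even positive integer), $b>0$, $\gamma\in(0,1]$. Let $\tau_1$ be the first detection time. Then $$\mathcal R(T)\le T\cdot\mathbb P(\tau_1\le T)+\tilde C+\gamma T,\qquad \tilde C=8\sum_{k:\Delta_k>0}\frac{\log T}{\Delta_k}+\Big(1+\frac{\pi^2}{3}+K\Big)\sum_{k=1}^K\Delta_k,$$ where $\Delta_k=\max_{\tilde k}\mu_{\tilde k}-\mu_k$.
   Context: At each time the agent picks arm $A_t$ based on past actions and observations and observes only $X_{A_t,t}$. Regret: $\mathcal R(T)=\sum_{t=1}^T\max_k\mathbb E[X_{k,t}]-\mathbb E[\sum_{t=1}^TX_{A_t,t}]$. Logarithms are natural. M-UCB algorithm (inputs $T,K$, even integer $w>0$, $b>0$, $\gamma\in(0,1]$): initialize $\tau\leftarrow0$, $n_k\leftarrow0$ for all $k$. For $t=1,\dots,T$: let $A=(t-\tau)\bmod\lfloor K/\gamma\rfloor$; if $1\le A\le K$ set $A_t=A$; otherwise set $A_t\in\arg\max_k\big(\frac1{n_k}\sum_{n=1}^{n_k}Z_{k,n}+\sqrt{2\log(t-\tau)/n_k}\big)$. Play $A_t$, observe $X_{A_t,t}$, set $n_{A_t}\leftarrow n_{A_t}+1$, $Z_{A_t,n_{A_t}}\leftarrow X_{A_t,t}$. If $n_{A_t}\ge w$ and the last $w$ stored observations $Y_1,\dots,Y_w$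 of arm $A_t$ satisfy $\left|\sum_{j=w/2+1}^{w}Y_j-\sum_{j=1}^{w/2}Y_j\right|>b$, this is a detection: set $\tau\leftarrow t$ and $n_k\leftarrow0$ for all $k$. The first detection time $\tau_1$ is the first $t$ at which a detection occurs ($+\infty$ if none). *)

theory Defs
  imports "HOL-Probability.Probability"
begin

text \<open>State of M-UCB after a round: (tau, n, Z, detection record).
  Arms are 1..K, rounds are 1..T.  Z k j is the j-th stored observation of arm k.
  The last component is Some t0 once a detection has occurred (t0 = first detection time).\<close>

type_synonym mucb_state = "nat \<times> (nat \<Rightarrow> nat) \<times> (nat \<Rightarrow> nat \<Rightarrow> real) \<times> nat option"

definition ucb_index :: "(nat \<Rightarrow> nat) \<Rightarrow> (nat \<Rightarrow> nat \<Rightarrow> real) \<Rightarrow> nat \<Rightarrow> nat \<Rightarrow> nat \<Rightarrow> real" where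
  "ucb_index n Z tau t k =
     (\<Sum>j=1..n k. Z k j) / real (n k) + sqrt (2 * ln (real (t - tau)) / real (n k))"

text \<open>Set of UCB maximisers; an arm with n_k = 0 has index +infinity.\<close>
definition ucb_argmax :: "nat \<Rightarrow> (nat \<Rightarrow> nat) \<Rightarrow> (nat \<Rightarrow> nat \<Rightarrow> real) \<Rightarrow> nat \<Rightarrow> nat \<Rightarrow> nat set" where
  "ucb_argmax K n Z tau t =
     (if \<exists>k\<in>{1..K}. n k = 0 then {k\<in>{1..K}. n k = 0}
      else {k\<in>{1..K}. \<forall>k'\<in>{1..K}. ucb_index n Z tau t k' \<le> ucb_index n Z tau t k})"

text \<open>Action at round t given the state after round t-1; ties among maximisers are
  broken by an arbitrary rule tb (depending on t and the set of maximisers).\<close>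
definition mucb_action ::
  "nat \<Rightarrow> real \<Rightarrow> (nat \<Rightarrow> nat set \<Rightarrow> nat) \<Rightarrow> nat \<Rightarrow> mucb_state \<Rightarrow> nat" where
  "mucb_action K \<gamma> tb t s = (case s of (tau, n, Z, d) \<Rightarrow>
     (let A = (t - tau) mod nat \<lfloor>real K / \<gamma>\<rfloor> in
      if 1 \<le> A \<and> A \<le> K then A else tb t (ucb_argmax K n Z tau t)))"

definition mucb_detect :: "nat \<Rightarrow> real \<Rightarrow> (nat \<Rightarrow> nat \<Rightarrow> real) \<Rightarrow> nat \<Rightarrow> nat \<Rightarrow> bool" where
  "mucb_detect w b Z a m =
     (w \<le> m \<and>
      \<bar>(\<Sum>j\<in>{w div 2 + 1..w}. Z a (m - w + j)) - (\<Sum>j\<in>{1..w div 2}. Z a (m - w + j))\<bar> > b)"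

definition mucb_step ::
  "nat \<Rightarrow> nat \<Rightarrow> real \<Rightarrow> real \<Rightarrow> (nat \<Rightarrow> nat set \<Rightarrow> nat) \<Rightarrow> (nat \<Rightarrow> nat \<Rightarrow> real)
   \<Rightarrow> nat \<Rightarrow> mucb_state \<Rightarrow> mucb_state" where
  "mucb_step K w b \<gamma> tb x t s = (case s of (tau, n, Z, d) \<Rightarrow>
     (let a = mucb_action K \<gamma> tb t s;
          m = Suc (n a);
          n' = n(a := m);
          Z' = Z(a := (Z a)(m := x a t)) in
      if mucb_detect w b Z' a m
      then (t, (\<lambda>_. 0), Z', (case d of None \<Rightarrow> Some t | Some t0 \<Rightarrow> Some t0))
      else (tau, n', Z', d)))"

text \<open>State after rounds 1..t, when the reward table is x (x k t = X_{k,t}).\<close>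
primrec mucb_run ::
  "nat \<Rightarrow> nat \<Rightarrow> real \<Rightarrow> real \<Rightarrow> (nat \<Rightarrow> nat set \<Rightarrow> nat) \<Rightarrow> (nat \<Rightarrow> nat \<Rightarrow> real)
   \<Rightarrow> nat \<Rightarrow> mucb_state" where
  "mucb_run K w b \<gamma> tb x 0 = (0, (\<lambda>_. 0), (\<lambda>_ _. 0), None)"
| "mucb_run K w b \<gamma> tb x (Suc t) =
     mucb_step K w b \<gamma> tb x (Suc t) (mucb_run K w b \<gamma> tb x t)"

definition mucb_arm ::
  "nat \<Rightarrow> nat \<Rightarrow> real \<Rightarrow> real \<Rightarrow> (nat \<Rightarrow> nat set \<Rightarrow> nat) \<Rightarrow> (nat \<Rightarrow> nat \<Rightarrow> real)
   \<Rightarrow> nat \<Rightarrow> nat" where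
  "mucb_arm K w b \<gamma> tb x t = mucb_action K \<gamma> tb t (mucb_run K w b \<gamma> tb x (t - 1))"

definition mucb_tau1 ::
  "nat \<Rightarrow> nat \<Rightarrow> real \<Rightarrow> real \<Rightarrow> (nat \<Rightarrow> nat set \<Rightarrow> nat) \<Rightarrow> (nat \<Rightarrow> nat \<Rightarrow> real) \<Rightarrow> enat" where
  "mucb_tau1 K w b \<gamma> tb x =
     (if \<exists>t. snd (snd (snd (mucb_run K w b \<gamma> tb x t))) \<noteq> None
      then enat (LEAST t. snd (snd (snd (mucb_run K w b \<gamma> tb x t))) \<noteq> None)
      else \<infinity>)"

end

theory Submission
  imports Defs
begin

text \<open>Run next to M-UCB the same algorithm with detection threshold \<open>w\<close>: on rewards in
  \<open>[0,1]\<close> that test can never fire, so the second run is plain UCB with forced exploration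
  every \<open>L = \<lfloor>K/\<gamma>\<rfloor>\<close> rounds, and both runs coincide up to the first detection. Hence the
  regret is at most \<open>T \<cdot> P(\<tau>\<^sub>1 \<le> T)\<close> plus the regret of the plain run. In the plain run a
  suboptimal arm \<open>k\<close> is pulled at most \<open>8 log T / \<Delta>\<^sub>k\<^sup>2\<close> times, plus at most \<open>T/L + 1\<close> forced
  times, plus once per round in which the empirical mean of \<open>k\<close> or of the best arm leaves its
  confidence interval. The latter events are controlled by Hoeffding's inequality in maximal
  form, via the exponential supermartingale of the first \<open>m\<close> observations of an arm, and have
  total probability at most \<open>1\<close>. Finally the forced pulls cost at most \<open>(K - 1) T / L \<le> \<gamma> T\<close>.\<close>

section \<open>The state of M-UCB\<close>

declare mucb_run.simps(2)[simp del]

definition tau_of :: "mucb_state \<Rightarrow> nat" where "tau_of s = fst s"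
definition counts_of :: "mucb_state \<Rightarrow> nat \<Rightarrow> nat" where "counts_of s = fst (snd s)"
definition obs_of :: "mucb_state \<Rightarrow> nat \<Rightarrow> nat \<Rightarrow> real" where "obs_of s = fst (snd (snd s))"
definition detection_of :: "mucb_state \<Rightarrow> nat option" where "detection_of s = snd (snd (snd s))"

lemma mucb_step_eq: "mucb_step K w b \<gamma> tb x t s =
  (let a = mucb_action K \<gamma> tb t s; m = Suc (counts_of s a);
       Z' = (obs_of s)(a := (obs_of s a)(m := x a t)) in
   if mucb_detect w b Z' a m
   then (t, \<lambda>_. 0, Z', Some (case detection_of s of None \<Rightarrow> t | Some t0 \<Rightarrow> t0))
   else (tau_of s, (counts_of s)(a := m), Z', detection_of s))"
  by (cases s)
     (auto simp: mucb_step_def tau_of_def counts_of_def obs_of_def detection_of_def Let_def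
           split: option.split)

lemma mucb_action_eq: "mucb_action K \<gamma> tb t s =
     (let A = (t - tau_of s) mod nat \<lfloor>real K / \<gamma>\<rfloor> in
      if 1 \<le> A \<and> A \<le> K then A
      else tb t (ucb_argmax K (counts_of s) (obs_of s) (tau_of s) t))"
  by (simp add: mucb_action_def tau_of_def counts_of_def obs_of_def case_prod_beta Let_def)

lemma ucb_argmax_subset: "ucb_argmax K n Z tau t \<subseteq> {1..K}"
  by (auto simp: ucb_argmax_def)

lemma ucb_argmax_nonempty:
  assumes "1 \<le> K"
  shows "ucb_argmax K n Z tau t \<noteq> {}"
proof (cases "\<exists>k\<in>{1..K}. n k = 0")
  case True
  then show ?thesis by (auto simp: ucb_argmax_def)
next
  case False
  let ?f = "ucb_index n Z tau t"
  have fin: "finite (?f ` {1..K})" and ne: "?f ` {1..K} \<noteq> {}" using assms by auto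
  obtain k where k: "k \<in> {1..K}" "?f k = Max (?f ` {1..K})"
    using Max_in[OF fin ne] by auto
  then have "\<forall>k'\<in>{1..K}. ?f k' \<le> ?f k"
    using Max_ge[OF fin] by auto
  with k False show ?thesis by (auto simp: ucb_argmax_def)
qed

lemma mucb_detect_never_fires:
  assumes "\<And>j. Z a j \<in> {0..1}"
  shows "\<not> mucb_detect w (real w) Z a m"
proof -
  let ?A = "\<Sum>j\<in>{w div 2 + 1..w}. Z a (m - w + j)"
  let ?B = "\<Sum>j\<in>{1..w div 2}. Z a (m - w + j)"
  have "0 \<le> ?A" "0 \<le> ?B" using assms by (auto intro: sum_nonneg)
  moreover have "?A \<le> real (card {w div 2 + 1..w}) * 1"
    by (rule sum_bounded_above) (use assms in auto)
  moreover have "?B \<le> real (card {1..w div 2}) * 1"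
    by (rule sum_bounded_above) (use assms in auto)
  ultimately have "\<bar>?A - ?B\<bar> \<le> real w" by simp linarith
  then show ?thesis by (simp add: mucb_detect_def)
qed

lemma card_residue_class_le:
  fixes L k T :: nat
  assumes "1 \<le> L"
  shows "card {r \<in> {1..T}. r mod L = k} \<le> T div L + 1"
proof -
  have inj: "inj_on (\<lambda>r. r div L) {r \<in> {1..T}. r mod L = k}"
    by (rule inj_onI) (metis (mono_tags, lifting) div_mult_mod_eq mem_Collect_eq)
  have "(\<lambda>r. r div L) ` {r \<in> {1..T}. r mod L = k} \<subseteq> {..T div L}"
    by (auto intro: div_le_mono)
  then have "card ((\<lambda>r. r div L) ` {r \<in> {1..T}. r mod L = k}) \<le> card {..T div L}"
    by (intro card_mono) auto
  with card_image[OF inj] show ?thesis by simp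
qed

section \<open>M-UCB and its run without restarts\<close>

locale mucb =
  fixes K :: nat and \<gamma> :: real and tb :: "nat \<Rightarrow> nat set \<Rightarrow> nat"
  assumes K_pos: "1 \<le> K" and gamma_pos: "0 < \<gamma>" and gamma_le_1: "\<gamma> \<le> 1"
    and tb_in: "\<And>t S. S \<noteq> {} \<Longrightarrow> S \<subseteq> {1..K} \<Longrightarrow> tb t S \<in> S"
begin

definition period :: nat where "period = nat \<lfloor>real K / \<gamma>\<rfloor>"

lemma K_le_floor: "int K \<le> \<lfloor>real K / \<gamma>\<rfloor>"
proof -
  have "real K \<le> real K / \<gamma>"
    using gamma_pos gamma_le_1 by (simp add: le_divide_eq mult_left_le)
  then show ?thesis by (simp add: le_floor_iff)
qed

lemma K_le_period: "K \<le> period"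
  using K_le_floor unfolding period_def by linarith

lemma period_pos: "1 \<le> period"
  using K_le_period K_pos by simp

lemma K_minus_1_le_gamma_period: "real K - 1 \<le> \<gamma> * real period"
proof -
  have "real period = \<lfloor>real K / \<gamma>\<rfloor>"
    unfolding period_def using K_le_floor by simp
  then have "real K / \<gamma> < real period + 1" by linarith
  then have "real K < \<gamma> * (real period + 1)"
    using gamma_pos by (simp add: divide_less_eq mult.commute)
  then show ?thesis using gamma_le_1 by (simp add: algebra_simps)
qed

lemma action_in_arms: "mucb_action K \<gamma> tb t s \<in> {1..K}"
proof -
  have "tb t (ucb_argmax K (counts_of s) (obs_of s) (tau_of s) t) \<in> {1..K}"
    using tb_in[OF ucb_argmax_nonempty[OF K_pos] ucb_argmax_subset] ucb_argmax_subset by blast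
  then show ?thesis unfolding mucb_action_eq period_def[symmetric] Let_def by auto
qed

abbreviation run where "run w b x t \<equiv> mucb_run K w b \<gamma> tb x t"

abbreviation act where "act w b x t \<equiv> mucb_action K \<gamma> tb (Suc t) (run w b x t)"

lemma run_Suc: "run w b x (Suc t) = mucb_step K w b \<gamma> tb x (Suc t) (run w b x t)"
  by (simp add: mucb_run.simps)

lemma run_cong:
  assumes "\<And>k s. k \<in> {1..K} \<Longrightarrow> s \<in> {1..t} \<Longrightarrow> x k s = y k s"
  shows "run w b x t = run w b y t"
  using assms
proof (induction t)
  case 0
  then show ?case by simp
next
  case (Suc t)
  then have "run w b x t = run w b y t" by auto
  moreover have "x (act w b x t) (Suc t) = y (act w b x t) (Suc t)"
    using Suc.prems action_in_arms by auto
  ultimately show ?case by (simp only: run_Suc mucb_step_eq Let_def)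
qed

lemma detection_Suc:
  "detection_of (run w b x t) \<noteq> None \<Longrightarrow> detection_of (run w b x (Suc t)) \<noteq> None"
  by (simp only: run_Suc mucb_step_eq Let_def) (auto simp: detection_of_def split: if_splits)

lemma detection_mono:
  assumes "t \<le> t'" "detection_of (run w b x t) \<noteq> None"
  shows "detection_of (run w b x t') \<noteq> None"
  using assms(1) by (induction t' rule: dec_induct) (use assms(2) detection_Suc in auto)

lemma tau1_le_iff: "mucb_tau1 K w b \<gamma> tb x \<le> enat T \<longleftrightarrow> detection_of (run w b x T) \<noteq> None"
proof
  assume le: "mucb_tau1 K w b \<gamma> tb x \<le> enat T"
  then have ex: "\<exists>t. detection_of (run w b x t) \<noteq> None"
    unfolding mucb_tau1_def detection_of_def by (auto split: if_splits)
  let ?t = "LEAST t. detection_of (run w b x t) \<noteq> None"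
  have "?t \<le> T" using le ex unfolding mucb_tau1_def detection_of_def by auto
  with LeastI_ex[OF ex] show "detection_of (run w b x T) \<noteq> None"
    using detection_mono by blast
next
  assume det: "detection_of (run w b x T) \<noteq> None"
  then have "(LEAST t. detection_of (run w b x t) \<noteq> None) \<le> T" by (rule Least_le)
  with det show "mucb_tau1 K w b \<gamma> tb x \<le> enat T"
    unfolding mucb_tau1_def detection_of_def by auto
qed

definition unit_rewards :: "(nat \<Rightarrow> nat \<Rightarrow> real) \<Rightarrow> nat \<Rightarrow> bool" where
  "unit_rewards x t \<longleftrightarrow> (\<forall>k\<in>{1..K}. \<forall>s\<in>{1..t}. x k s \<in> {0..1})"

lemma unit_rewards_mono: "unit_rewards x t \<Longrightarrow> t' \<le> t \<Longrightarrow> unit_rewards x t'"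
  by (auto simp: unit_rewards_def)

lemma obs_in_unit:
  assumes "unit_rewards x t"
  shows "obs_of (run w b x t) k j \<in> {0..1}"
  using assms
proof (induction t arbitrary: k j)
  case 0
  then show ?case by (simp add: obs_of_def)
next
  case (Suc t)
  have "x (act w b x t) (Suc t) \<in> {0..1}"
    using Suc.prems action_in_arms by (auto simp: unit_rewards_def)
  moreover have "\<And>k j. obs_of (run w b x t) k j \<in> {0..1}"
    using Suc unit_rewards_mono by auto
  ultimately show ?case
    by (simp only: run_Suc mucb_step_eq Let_def) (auto simp: obs_of_def)
qed

lemma count_le: "counts_of (run w b x t) k \<le> t"
proof (induction t arbitrary: k)
  case 0
  then show ?case by (simp add: counts_of_def)
next
  case (Suc t)
  then show ?case
    by (simp only: run_Suc mucb_step_eq Let_def) (auto simp: counts_of_def le_SucI)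
qed

abbreviation plain_run where "plain_run w x t \<equiv> run w (real w) x t"

abbreviation plain_act where "plain_act w x t \<equiv> act w (real w) x t"

lemma plain_run_Suc:
  assumes "unit_rewards x (Suc t)"
  shows "plain_run w x (Suc t) =
    (let s = plain_run w x t; a = plain_act w x t in
     (tau_of s, (counts_of s)(a := Suc (counts_of s a)),
      (obs_of s)(a := (obs_of s a)(Suc (counts_of s a) := x a (Suc t))), detection_of s))"
proof -
  let ?s = "plain_run w x t"
  let ?a = "plain_act w x t"
  let ?Z' = "(obs_of ?s)(?a := (obs_of ?s ?a)(Suc (counts_of ?s ?a) := x ?a (Suc t)))"
  have "obs_of ?s ?a j \<in> {0..1}" for j
    using assms unit_rewards_mono by (intro obs_in_unit) auto
  moreover have "x ?a (Suc t) \<in> {0..1}"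
    using assms action_in_arms by (auto simp: unit_rewards_def)
  ultimately have "\<not> mucb_detect w (real w) ?Z' ?a (Suc (counts_of ?s ?a))"
    by (intro mucb_detect_never_fires) auto
  then show ?thesis by (simp only: run_Suc mucb_step_eq Let_def if_False)
qed

lemma plain_run_tau_detection:
  assumes "unit_rewards x t"
  shows "tau_of (plain_run w x t) = 0 \<and> detection_of (plain_run w x t) = None"
  using assms
proof (induction t)
  case 0
  then show ?case by (simp add: tau_of_def detection_of_def)
next
  case (Suc t)
  then have "unit_rewards x t" using unit_rewards_mono by auto
  with Suc show ?case
    by (simp add: plain_run_Suc[OF Suc.prems] Let_def tau_of_def detection_of_def)
qed

lemma run_eq_plain_run_before_detection:
  assumes "unit_rewards x t" "detection_of (run w b x t) = None"
  shows "run w b x t = plain_run w x t"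
  using assms
proof (induction t)
  case 0
  then show ?case by simp
next
  case (Suc t)
  have "detection_of (run w b x t) = None" using Suc.prems(2) detection_Suc by blast
  then have IH: "run w b x t = plain_run w x t"
    using Suc unit_rewards_mono by auto
  let ?s = "run w b x t"
  let ?a = "act w b x t"
  let ?Z' = "(obs_of ?s)(?a := (obs_of ?s ?a)(Suc (counts_of ?s ?a) := x ?a (Suc t)))"
  have "\<not> mucb_detect w b ?Z' ?a (Suc (counts_of ?s ?a))"
  proof
    assume "mucb_detect w b ?Z' ?a (Suc (counts_of ?s ?a))"
    then have "detection_of (run w b x (Suc t)) \<noteq> None"
      by (simp only: run_Suc mucb_step_eq Let_def) (simp add: detection_of_def)
    with Suc.prems(2) show False by simp
  qed
  then have "run w b x (Suc t) = (tau_of ?s, (counts_of ?s)(?a := Suc (counts_of ?s ?a)), ?Z', detection_of ?s)"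
    by (simp only: run_Suc mucb_step_eq Let_def if_False)
  also have "\<dots> = plain_run w x (Suc t)"
    unfolding plain_run_Suc[OF Suc.prems(1)] Let_def IH ..
  finally show ?case .
qed

lemma plain_count_Suc:
  assumes "unit_rewards x (Suc t)"
  shows "counts_of (plain_run w x (Suc t)) k =
    counts_of (plain_run w x t) k + (if plain_act w x t = k then 1 else 0)"
  using plain_run_Suc[OF assms] by (simp add: Let_def counts_of_def)

lemma plain_obs_Suc:
  assumes "unit_rewards x (Suc t)"
  shows "obs_of (plain_run w x (Suc t)) k j =
     (if plain_act w x t = k \<and> j = Suc (counts_of (plain_run w x t) k) then x k (Suc t)
      else obs_of (plain_run w x t) k j)"
  using plain_run_Suc[OF assms] by (simp add: Let_def obs_of_def)

definition forced :: "nat \<Rightarrow> bool" where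
  "forced t \<longleftrightarrow> 1 \<le> t mod period \<and> t mod period \<le> K"

lemma plain_act_forced:
  assumes "unit_rewards x t" "forced (Suc t)"
  shows "plain_act w x t = Suc t mod period"
  using assms plain_run_tau_detection[OF assms(1)]
  by (simp add: forced_def mucb_action_eq period_def[symmetric] Let_def)

lemma plain_act_ucb:
  assumes "unit_rewards x t" "\<not> forced (Suc t)"
  shows "plain_act w x t \<in> ucb_argmax K (counts_of (plain_run w x t)) (obs_of (plain_run w x t)) 0 (Suc t)"
proof -
  let ?S = "ucb_argmax K (counts_of (plain_run w x t)) (obs_of (plain_run w x t)) 0 (Suc t)"
  have "tb (Suc t) ?S \<in> ?S" by (rule tb_in[OF ucb_argmax_nonempty[OF K_pos] ucb_argmax_subset])
  then show ?thesis
    using assms plain_run_tau_detection[OF assms(1)]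
    by (auto simp: forced_def mucb_action_eq period_def[symmetric] Let_def)
qed

lemma card_pulls_below_le:
  assumes "unit_rewards x T" "t \<le> T"
  shows "card {s \<in> {..<t}. plain_act w x s = k \<and> counts_of (plain_run w x s) k < l}
           \<le> min (counts_of (plain_run w x t) k) l"
  using assms(2)
proof (induction t)
  case 0
  then show ?case by (simp add: counts_of_def)
next
  case (Suc t)
  let ?P = "\<lambda>s. plain_act w x s = k \<and> counts_of (plain_run w x s) k < l"
  have "{s \<in> {..<Suc t}. ?P s} = {s \<in> {..<t}. ?P s} \<union> (if ?P t then {t} else {})"
    by (auto simp: less_Suc_eq)
  then have "card {s \<in> {..<Suc t}. ?P s} = card {s \<in> {..<t}. ?P s} + (if ?P t then 1 else 0)"
    by (simp add: card_insert_if)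
  moreover have "unit_rewards x (Suc t)" using assms(1) Suc.prems unit_rewards_mono by blast
  ultimately show ?case
    using Suc plain_count_Suc[where k = k] by auto
qed

end

section \<open>Measurability of the run\<close>

lemma measurable_compose_nat:
  fixes g :: "'b \<Rightarrow> nat" and f :: "nat \<Rightarrow> 'b \<Rightarrow> 'c"
  assumes "g \<in> measurable N (count_space UNIV)" "\<And>i. f i \<in> measurable N M"
  shows "(\<lambda>\<omega>. f (g \<omega>) \<omega>) \<in> measurable N M"
  by (rule measurable_compose_countable'[where I=UNIV]) (use assms in auto)

definition measurable_state :: "'b measure \<Rightarrow> ('b \<Rightarrow> mucb_state) \<Rightarrow> bool" where
  "measurable_state N s \<longleftrightarrow>
     (\<lambda>\<omega>. tau_of (s \<omega>)) \<in> measurable N (count_space UNIV) \<and>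
     (\<forall>k. (\<lambda>\<omega>. counts_of (s \<omega>) k) \<in> measurable N (count_space UNIV)) \<and>
     (\<forall>k j. (\<lambda>\<omega>. obs_of (s \<omega>) k j) \<in> borel_measurable N) \<and>
     (\<lambda>\<omega>. detection_of (s \<omega>)) \<in> measurable N (count_space UNIV)"

lemma measurable_ucb_index:
  assumes "measurable_state N s"
  shows "(\<lambda>\<omega>. ucb_index (counts_of (s \<omega>)) (obs_of (s \<omega>)) (tau_of (s \<omega>)) t k) \<in> borel_measurable N"
proof -
  have n: "(\<lambda>\<omega>. counts_of (s \<omega>) k) \<in> measurable N (count_space UNIV)"
   and tau: "(\<lambda>\<omega>. tau_of (s \<omega>)) \<in> measurable N (count_space UNIV)"
   and Z: "\<And>j. (\<lambda>\<omega>. obs_of (s \<omega>) k j) \<in> borel_measurable N"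
    using assms by (auto simp: measurable_state_def)
  have "(\<lambda>\<omega>. (\<lambda>i \<omega>. \<Sum>j=1..i. obs_of (s \<omega>) k j) (counts_of (s \<omega>) k) \<omega>) \<in> borel_measurable N"
    by (rule measurable_compose_nat[OF n]) (use Z in measurable)
  moreover have "(\<lambda>\<omega>. (\<lambda>i \<omega>. real i) (counts_of (s \<omega>) k) \<omega>) \<in> borel_measurable N"
    by (rule measurable_compose_nat[OF n]) auto
  moreover have "(\<lambda>\<omega>. (\<lambda>i \<omega>. ln (real (t - i))) (tau_of (s \<omega>)) \<omega>) \<in> borel_measurable N"
    by (rule measurable_compose_nat[OF tau]) auto
  ultimately show ?thesis unfolding ucb_index_def by simp measurable
qed

lemma measurable_ucb_argmax:
  assumes "measurable_state N s"
  shows "(\<lambda>\<omega>. ucb_argmax K (counts_of (s \<omega>)) (obs_of (s \<omega>)) (tau_of (s \<omega>)) t)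
           \<in> measurable N (count_space (Pow {1..K}))"
proof -
  let ?n = "\<lambda>\<omega>. counts_of (s \<omega>)"
  let ?i = "\<lambda>\<omega> k. ucb_index (counts_of (s \<omega>)) (obs_of (s \<omega>)) (tau_of (s \<omega>)) t k"
  let ?S = "\<lambda>\<omega>. ucb_argmax K (counts_of (s \<omega>)) (obs_of (s \<omega>)) (tau_of (s \<omega>)) t"
  define P where "P k \<omega> \<longleftrightarrow> (if \<exists>k'\<in>{1..K}. ?n \<omega> k' = 0 then ?n \<omega> k = 0
                               else \<forall>k'\<in>{1..K}. ?i \<omega> k' \<le> ?i \<omega> k)" for k \<omega>
  have n[measurable]: "\<And>k. (\<lambda>\<omega>. counts_of (s \<omega>) k) \<in> measurable N (count_space UNIV)"
    using assms by (auto simp: measurable_state_def)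
  have [measurable]: "\<And>k. (\<lambda>\<omega>. ?i \<omega> k) \<in> borel_measurable N"
    using measurable_ucb_index[OF assms] .
  have [measurable]: "Measurable.pred N (\<lambda>\<omega>. counts_of (s \<omega>) k = 0)" for k
    by (rule pred_count_space_const1[OF n])
  have P: "Measurable.pred N (P k)" for k
    unfolding P_def if_bool_eq_conj by measurable
  show ?thesis
  proof (rule measurable_count_space_eq_countable[THEN iffD2, OF countable_finite],
         simp, intro conjI ballI)
    show "?S \<in> space N \<rightarrow> Pow {1..K}"
      using ucb_argmax_subset by auto
  next
    fix S assume S: "S \<in> Pow {1..K}"
    have "\<And>\<omega> k. k \<in> {1..K} \<Longrightarrow> (k \<in> ?S \<omega>) = P k \<omega>"
      unfolding P_def ucb_argmax_def by auto
    moreover have "\<And>A. A \<subseteq> {1..K} \<Longrightarrow> (A = S) = (\<forall>k\<in>{1..K}. k \<in> S \<longleftrightarrow> k \<in> A)"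
      using S by blast
    ultimately have "?S -` {S} \<inter> space N = {\<omega> \<in> space N. \<forall>k\<in>{1..K}. k \<in> S \<longleftrightarrow> P k \<omega>}"
      using ucb_argmax_subset by (intro set_eqI) (simp add: conj_commute)
    also have "\<dots> \<in> sets N" using P by measurable
    finally show "?S -` {S} \<inter> space N \<in> sets N" .
  qed
qed

context mucb
begin

lemma measurable_action:
  assumes "measurable_state N s"
  shows "(\<lambda>\<omega>. mucb_action K \<gamma> tb t (s \<omega>)) \<in> measurable N (count_space UNIV)"
proof -
  have [measurable]: "(\<lambda>\<omega>. tau_of (s \<omega>)) \<in> measurable N (count_space UNIV)"
    using assms by (auto simp: measurable_state_def)
  have [measurable]: "(\<lambda>\<omega>. tb t (ucb_argmax K (counts_of (s \<omega>)) (obs_of (s \<omega>)) (tau_of (s \<omega>)) t))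
      \<in> measurable N (count_space UNIV)"
    by (rule measurable_compose[OF measurable_ucb_argmax[OF assms]]) simp
  show ?thesis unfolding mucb_action_eq Let_def period_def[symmetric] by measurable
qed

definition step_detects where
  "step_detects w b x t s = (let a = mucb_action K \<gamma> tb t s; m = Suc (counts_of s a) in
     mucb_detect w b ((obs_of s)(a := (obs_of s a)(m := x a t))) a m)"

lemma mucb_step_components:
  "tau_of (mucb_step K w b \<gamma> tb x t s) = (if step_detects w b x t s then t else tau_of s)"
  "counts_of (mucb_step K w b \<gamma> tb x t s) k = (if step_detects w b x t s then 0 else
      if k = mucb_action K \<gamma> tb t s then Suc (counts_of s k) else counts_of s k)"
  "obs_of (mucb_step K w b \<gamma> tb x t s) k j =
     (if k = mucb_action K \<gamma> tb t s \<and> j = Suc (counts_of s k) then x k t else obs_of s k j)"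
  "detection_of (mucb_step K w b \<gamma> tb x t s) = (if step_detects w b x t s then
      Some (case detection_of s of None \<Rightarrow> t | Some t0 \<Rightarrow> t0) else detection_of s)"
  by (simp_all add: mucb_step_eq step_detects_def Let_def
                    tau_of_def counts_of_def obs_of_def detection_of_def)

lemma measurable_step_detects:
  assumes s: "measurable_state N s" and x: "\<And>k j. (\<lambda>\<omega>. x \<omega> k j) \<in> borel_measurable N"
  shows "Measurable.pred N (\<lambda>\<omega>. step_detects w b (x \<omega>) t (s \<omega>))"
proof -
  let ?a = "\<lambda>\<omega>. mucb_action K \<gamma> tb t (s \<omega>)"
  let ?Z' = "\<lambda>\<omega>. obs_of (mucb_step K w b \<gamma> tb (x \<omega>) t (s \<omega>))"
  have n[measurable]: "\<And>k. (\<lambda>\<omega>. counts_of (s \<omega>) k) \<in> measurable N (count_space UNIV)"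
   and [measurable]: "\<And>k j. (\<lambda>\<omega>. obs_of (s \<omega>) k j) \<in> borel_measurable N"
    using s by (auto simp: measurable_state_def)
  have a[measurable]: "?a \<in> measurable N (count_space UNIV)"
    by (rule measurable_action[OF s])
  have [measurable]: "Measurable.pred N (\<lambda>\<omega>. k = ?a \<omega>)" for k
    by (rule pred_count_space_const2[OF a])
  have [measurable]: "Measurable.pred N (\<lambda>\<omega>. j = Suc (counts_of (s \<omega>) k))" for j k
  proof -
    have "(\<lambda>\<omega>. Suc (counts_of (s \<omega>) k)) \<in> measurable N (count_space UNIV)"
      by (rule measurable_compose[OF n]) simp
    then show ?thesis by (rule pred_count_space_const2)
  qed
  have [measurable]: "(\<lambda>\<omega>. ?Z' \<omega> k j) \<in> borel_measurable N" for k j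
    unfolding mucb_step_components using x by measurable
  have "Measurable.pred N (\<lambda>\<omega>. mucb_detect w b (?Z' \<omega>) a0 m0)" for a0 m0
    unfolding mucb_detect_def by measurable
  then have "Measurable.pred N (\<lambda>\<omega>. (\<lambda>i \<omega>. mucb_detect w b (?Z' \<omega>) a0 (Suc i)) (counts_of (s \<omega>) a0) \<omega>)" for a0
    by (rule measurable_compose_nat[OF n])
  then have "Measurable.pred N
      (\<lambda>\<omega>. (\<lambda>i \<omega>. mucb_detect w b (?Z' \<omega>) i (Suc (counts_of (s \<omega>) i))) (?a \<omega>) \<omega>)"
    by (rule measurable_compose_nat[OF a])
  moreover have "step_detects w b (x \<omega>) t (s \<omega>) =
      mucb_detect w b (?Z' \<omega>) (?a \<omega>) (Suc (counts_of (s \<omega>) (?a \<omega>)))" for \<omega>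
    unfolding step_detects_def Let_def
    by (rule arg_cong[where f="\<lambda>Z. mucb_detect w b Z _ _"]) (auto simp: mucb_step_components fun_eq_iff)
  ultimately show ?thesis by simp
qed

lemma measurable_state_step:
  assumes s: "measurable_state N s" and x[measurable]: "\<And>k j. (\<lambda>\<omega>. x \<omega> k j) \<in> borel_measurable N"
  shows "measurable_state N (\<lambda>\<omega>. mucb_step K w b \<gamma> tb (x \<omega>) t (s \<omega>))"
proof -
  have [measurable]: "(\<lambda>\<omega>. tau_of (s \<omega>)) \<in> measurable N (count_space UNIV)"
   and n[measurable]: "\<And>k. (\<lambda>\<omega>. counts_of (s \<omega>) k) \<in> measurable N (count_space UNIV)"
   and [measurable]: "\<And>k j. (\<lambda>\<omega>. obs_of (s \<omega>) k j) \<in> borel_measurable N"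
   and d[measurable]: "(\<lambda>\<omega>. detection_of (s \<omega>)) \<in> measurable N (count_space UNIV)"
    using s by (auto simp: measurable_state_def)
  have a[measurable]: "(\<lambda>\<omega>. mucb_action K \<gamma> tb t (s \<omega>)) \<in> measurable N (count_space UNIV)"
    by (rule measurable_action[OF s])
  have [measurable]: "Measurable.pred N (\<lambda>\<omega>. k = mucb_action K \<gamma> tb t (s \<omega>))" for k
    by (rule pred_count_space_const2[OF a])
  have [measurable]: "(\<lambda>\<omega>. Suc (counts_of (s \<omega>) k)) \<in> measurable N (count_space UNIV)" for k
    by (rule measurable_compose[OF n]) simp
  have [measurable]: "Measurable.pred N (\<lambda>\<omega>. j = Suc (counts_of (s \<omega>) k))" for j k
    by (rule pred_count_space_const2) measurable
  have [measurable]: "Measurable.pred N (\<lambda>\<omega>. step_detects w b (x \<omega>) t (s \<omega>))"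
    by (rule measurable_step_detects[OF s x])
  have [measurable]: "(\<lambda>\<omega>. case detection_of (s \<omega>) of None \<Rightarrow> t | Some t0 \<Rightarrow> t0)
      \<in> measurable N (count_space UNIV)"
    by (rule measurable_compose[OF d]) simp
  have [measurable]: "(\<lambda>\<omega>. obs_of (mucb_step K w b \<gamma> tb (x \<omega>) t (s \<omega>)) k j) \<in> borel_measurable N" for k j
    unfolding mucb_step_components by measurable
  show ?thesis unfolding measurable_state_def
    apply (intro conjI allI)
    subgoal unfolding mucb_step_components by measurable
    subgoal unfolding mucb_step_components by measurable
    subgoal by measurable
    subgoal unfolding mucb_step_components by measurable
    done
qed

lemma measurable_state_run:
  assumes "\<And>k j. (\<lambda>\<omega>. x \<omega> k j) \<in> borel_measurable N"
  shows "measurable_state N (\<lambda>\<omega>. run w b (x \<omega>) t)"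
proof (induction t)
  case 0
  then show ?case by (simp add: measurable_state_def tau_of_def counts_of_def obs_of_def detection_of_def)
next
  case (Suc t)
  then show ?case unfolding run_Suc by (rule measurable_state_step[OF _ assms])
qed

end

section \<open>The stochastic bandit\<close>

definition clamp01 :: "real \<Rightarrow> real" where "clamp01 y = max 0 (min 1 y)"

lemma clamp01_bounds [simp]: "0 \<le> clamp01 y" "clamp01 y \<le> 1"
  by (simp_all add: clamp01_def)

lemma abs_signed_clamp01_le:
  assumes "\<bar>\<sigma>\<bar> = 1"
  shows "\<bar>\<sigma> * (clamp01 y - mu)\<bar> \<le> 1 + \<bar>mu\<bar>"
proof -
  have "\<bar>clamp01 y - mu\<bar> \<le> 1 + \<bar>mu\<bar>"
    using clamp01_bounds[of y] by linarith
  then show ?thesis using assms by (simp add: abs_mult)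
qed

lemma clamp01_id: "y \<in> {0..1} \<Longrightarrow> clamp01 y = y"
  by (simp add: clamp01_def)

lemma borel_measurable_clamp01[measurable]: "clamp01 \<in> borel_measurable borel"
  unfolding clamp01_def by measurable

definition table_of :: "(nat \<times> nat) set \<Rightarrow> (nat \<times> nat \<Rightarrow> real) \<Rightarrow> nat \<Rightarrow> nat \<Rightarrow> real" where
  "table_of A p k s = (if (k, s) \<in> A then clamp01 (p (k, s)) else 0)"

lemma measurable_table_of: "(\<lambda>p. table_of A p k s) \<in> borel_measurable (PiM A (\<lambda>_. borel))"
proof (cases "(k, s) \<in> A")
  case True
  then have "(\<lambda>p. p (k, s)) \<in> borel_measurable (PiM A (\<lambda>_. borel))"
    by (rule measurable_component_singleton)
  then show ?thesis using True unfolding table_of_def by measurable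
qed (simp add: table_of_def)

locale mucb_bandit = mucb K \<gamma> tb + prob_space M
  for K \<gamma> tb and M :: "'a measure" +
  fixes X :: "nat \<Rightarrow> nat \<Rightarrow> 'a \<Rightarrow> real" and T :: nat and \<mu> :: "nat \<Rightarrow> real"
  assumes rv: "\<And>k t. k \<in> {1..K} \<Longrightarrow> t \<in> {1..T} \<Longrightarrow> X k t \<in> borel_measurable M"
    and range01: "\<And>k t \<omega>. k \<in> {1..K} \<Longrightarrow> t \<in> {1..T} \<Longrightarrow> \<omega> \<in> space M \<Longrightarrow> X k t \<omega> \<in> {0..1}"
    and indep: "indep_vars (\<lambda>_. borel) (\<lambda>(k, t). X k t) ({1..K} \<times> {1..T})"
    and mean: "\<And>k t. k \<in> {1..K} \<Longrightarrow> t \<in> {1..T} \<Longrightarrow> \<mu> k = expectation (X k t)"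
begin

lemma integrable_bounded:
  fixes B :: real
  assumes "f \<in> borel_measurable M" "\<And>\<omega>. \<omega> \<in> space M \<Longrightarrow> \<bar>f \<omega>\<bar> \<le> B"
  shows "integrable M f"
  by (rule integrable_const_bound[where B=B]) (use assms in auto)

definition cells :: "nat \<Rightarrow> (nat \<times> nat) set" where "cells t = {1..K} \<times> {1..t}"

definition past :: "nat \<Rightarrow> 'a \<Rightarrow> (nat \<times> nat \<Rightarrow> real)" where
  "past t \<omega> = restrict (\<lambda>i. (\<lambda>(k, s). X k s) i \<omega>) (cells t)"

text \<open>On \<open>space M\<close>
  the algorithm cannot tell it from \<open>X\<close>, but it satisfies \<open>unit_rewards\<close> everywhere and the
  run up to round \<open>t\<close> is a measurable function of \<open>past t\<close>.\<close>

definition reward_table :: "'a \<Rightarrow> nat \<Rightarrow> nat \<Rightarrow> real" where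
  "reward_table \<omega> k s = (if (k, s) \<in> cells T then clamp01 (X k s \<omega>) else 0)"

lemma measurable_reward_table: "(\<lambda>\<omega>. reward_table \<omega> k s) \<in> borel_measurable M"
proof (cases "(k, s) \<in> cells T")
  case True
  then have "X k s \<in> borel_measurable M" using rv by (auto simp: cells_def)
  then show ?thesis using True unfolding reward_table_def by measurable
qed (simp add: reward_table_def)

lemma unit_rewards_reward_table: "unit_rewards (reward_table \<omega>) t"
  by (auto simp: unit_rewards_def reward_table_def)

lemma unit_rewards_table_of: "unit_rewards (table_of A p) t"
  by (auto simp: unit_rewards_def table_of_def)

lemma measurable_past: "t \<le> T \<Longrightarrow> past t \<in> measurable M (PiM (cells t) (\<lambda>_. borel))"
  unfolding past_def by (rule measurable_restrict) (auto simp: cells_def intro!: rv)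

lemma run_reward_table_eq_past:
  assumes "t \<le> T"
  shows "run w b (reward_table \<omega>) t = run w b (table_of (cells t) (past t \<omega>)) t"
  by (rule run_cong) (use assms in \<open>auto simp: reward_table_def table_of_def past_def cells_def\<close>)

lemma run_eq_run_reward_table:
  assumes "t \<le> T" "\<omega> \<in> space M"
  shows "run w b (\<lambda>k s. X k s \<omega>) t = run w b (reward_table \<omega>) t"
  by (rule run_cong)
     (use assms in \<open>auto simp: reward_table_def cells_def intro!: clamp01_id[symmetric] range01\<close>)

lemma measurable_state_reward_table: "measurable_state M (\<lambda>\<omega>. run w b (reward_table \<omega>) t)"
  by (rule measurable_state_run) (rule measurable_reward_table)

lemma measurable_state_table_of:
  "measurable_state (PiM (cells t) (\<lambda>_. borel)) (\<lambda>p. run w b (table_of (cells t) p) t)"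
  by (rule measurable_state_run) (rule measurable_table_of)

lemma measurable_act: "(\<lambda>\<omega>. act w b (reward_table \<omega>) t) \<in> measurable M (count_space UNIV)"
  by (rule measurable_action[OF measurable_state_reward_table])

lemma obs_reward_table_in_unit: "obs_of (run w b (reward_table \<omega>) t) k j \<in> {0..1}"
  by (rule obs_in_unit[OF unit_rewards_reward_table])

lemma expectation_past_times_present:
  fixes B C :: real
  assumes t: "Suc t \<le> T" and k: "k \<in> {1..K}"
    and F: "F \<in> borel_measurable (PiM (cells t) (\<lambda>_. borel))" and F_bound: "\<And>p. \<bar>F p\<bar> \<le> B"
    and g: "g \<in> borel_measurable borel" and g_bound: "\<And>y. \<bar>g y\<bar> \<le> C"
  shows "expectation (\<lambda>\<omega>. F (past t \<omega>) * g (X k (Suc t) \<omega>))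
         = expectation (\<lambda>\<omega>. F (past t \<omega>)) * expectation (\<lambda>\<omega>. g (X k (Suc t) \<omega>))"
proof -
  let ?X = "\<lambda>(k, t). X k t"
  have "indep_var (PiM (cells t) (\<lambda>_. borel)) (\<lambda>\<omega>. restrict (\<lambda>i. ?X i \<omega>) (cells t))
                  (PiM {(k, Suc t)} (\<lambda>_. borel)) (\<lambda>\<omega>. restrict (\<lambda>i. ?X i \<omega>) {(k, Suc t)})"
    by (rule indep_var_restrict[OF indep]) (use t k in \<open>auto simp: cells_def\<close>)
  moreover have "(\<lambda>q. g (q (k, Suc t))) \<in> borel_measurable (PiM {(k, Suc t)} (\<lambda>_. borel))"
    using g by measurable
  ultimately have "indep_var borel (F \<circ> (\<lambda>\<omega>. restrict (\<lambda>i. ?X i \<omega>) (cells t)))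
      borel ((\<lambda>q. g (q (k, Suc t))) \<circ> (\<lambda>\<omega>. restrict (\<lambda>i. ?X i \<omega>) {(k, Suc t)}))"
    using F by (intro indep_var_compose)
  then have indep_Fg: "indep_var borel (\<lambda>\<omega>. F (past t \<omega>)) borel (\<lambda>\<omega>. g (X k (Suc t) \<omega>))"
    by (simp add: comp_def past_def)
  have "(\<lambda>\<omega>. F (past t \<omega>)) \<in> borel_measurable M"
    using measurable_comp[OF measurable_past F] t by (simp add: comp_def)
  then have "integrable M (\<lambda>\<omega>. F (past t \<omega>))"
    by (rule integrable_bounded) (rule F_bound)
  moreover have "X k (Suc t) \<in> borel_measurable M" using rv t k by auto
  then have "integrable M (\<lambda>\<omega>. g (X k (Suc t) \<omega>))"
    by (intro integrable_bounded[where B=C]) (use g g_bound in auto)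
  ultimately show ?thesis by (rule indep_var_lebesgue_integral[OF indep_Fg])
qed

lemma integrable_X: "k \<in> {1..K} \<Longrightarrow> t \<in> {1..T} \<Longrightarrow> integrable M (X k t)"
  by (rule integrable_bounded[where B=1]) (use rv range01 in auto)

lemma mean_in_unit:
  assumes "1 \<le> T" and k: "k \<in> {1..K}"
  shows "0 \<le> \<mu> k" "\<mu> k \<le> 1"
proof -
  have t: "1 \<in> {1..T}" using assms by simp
  have X1: "\<And>\<omega>. \<omega> \<in> space M \<Longrightarrow> X k 1 \<omega> \<in> {0..1}" using range01 k t by blast
  show "0 \<le> \<mu> k" unfolding mean[OF k t] by (rule integral_nonneg_AE) (use X1 in auto)
  have "expectation (X k 1) \<le> expectation (\<lambda>_. 1::real)"
    by (rule integral_mono[OF integrable_X[OF k t]]) (use X1 in auto)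
  then show "\<mu> k \<le> 1" unfolding mean[OF k t] by (simp add: prob_space)
qed

end

section \<open>Hoeffding's inequality for adaptively sampled arms\<close>

definition centered_sum :: "nat \<Rightarrow> nat \<Rightarrow> real \<Rightarrow> real \<Rightarrow> mucb_state \<Rightarrow> real" where
  "centered_sum k m \<sigma> mu s = (\<Sum>j=1..min (counts_of s k) m. \<sigma> * (obs_of s k j - mu))"

text \<open>The exponential supermartingale of the first \<open>m\<close> observations of arm \<open>k\<close>, with sign \<open>\<sigma> = \<plusminus>1\<close>
  selecting the direction of the deviation and \<open>l\<close> the exponential tilt.\<close>

definition hoeffding_process :: "nat \<Rightarrow> nat \<Rightarrow> real \<Rightarrow> real \<Rightarrow> real \<Rightarrow> mucb_state \<Rightarrow> real" where
  "hoeffding_process k m \<sigma> mu l s =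
     exp (l * centered_sum k m \<sigma> mu s - l\<^sup>2 / 8 * real (min (counts_of s k) m))"

lemma hoeffding_process_pos: "0 < hoeffding_process k m \<sigma> mu l s"
  by (simp add: hoeffding_process_def)

lemma centered_sum_abs_le:
  assumes "\<And>j. obs_of s k j \<in> {0..1}" "\<bar>\<sigma>\<bar> = 1"
  shows "\<bar>centered_sum k m \<sigma> mu s\<bar> \<le> real m * (1 + \<bar>mu\<bar>)"
proof -
  have "\<bar>centered_sum k m \<sigma> mu s\<bar> \<le> (\<Sum>j=1..min (counts_of s k) m. \<bar>\<sigma> * (obs_of s k j - mu)\<bar>)"
    unfolding centered_sum_def by (rule sum_abs)
  also have "\<dots> \<le> (\<Sum>j=1..min (counts_of s k) m. 1 + \<bar>mu\<bar>)"
  proof (rule sum_mono)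
    fix j
    have "obs_of s k j \<in> {0..1}" by (rule assms(1))
    then show "\<bar>\<sigma> * (obs_of s k j - mu)\<bar> \<le> 1 + \<bar>mu\<bar>" using assms(2) by (auto simp: abs_mult)
  qed
  also have "\<dots> \<le> real m * (1 + \<bar>mu\<bar>)" by (simp add: mult_right_mono)
  finally show ?thesis .
qed

lemma hoeffding_process_le:
  assumes "\<And>j. obs_of s k j \<in> {0..1}" "\<bar>\<sigma>\<bar> = 1" "0 \<le> l"
  shows "hoeffding_process k m \<sigma> mu l s \<le> exp (l * (real m * (1 + \<bar>mu\<bar>)))"
proof -
  have "l * centered_sum k m \<sigma> mu s \<le> l * (real m * (1 + \<bar>mu\<bar>))"
    using centered_sum_abs_le[OF assms(1,2), of m mu] assms(3) by (intro mult_left_mono) auto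
  moreover have "0 \<le> l\<^sup>2 / 8 * real (min (counts_of s k) m)" by simp
  ultimately have "l * centered_sum k m \<sigma> mu s - l\<^sup>2 / 8 * real (min (counts_of s k) m)
      \<le> l * (real m * (1 + \<bar>mu\<bar>))"
    by linarith
  then show ?thesis unfolding hoeffding_process_def by simp
qed

context mucb
begin

lemma hoeffding_process_plain_Suc:
  assumes "unit_rewards x (Suc t)"
  shows "hoeffding_process k m \<sigma> mu l (plain_run w x (Suc t)) =
     hoeffding_process k m \<sigma> mu l (plain_run w x t) *
     (if plain_act w x t = k \<and> counts_of (plain_run w x t) k < m
      then exp (l * (\<sigma> * (x k (Suc t) - mu)) - l\<^sup>2 / 8) else 1)"
proof -
  let ?s = "plain_run w x t"
  let ?s' = "plain_run w x (Suc t)"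
  let ?n = "counts_of ?s k"
  have n': "counts_of ?s' k = ?n + (if plain_act w x t = k then 1 else 0)"
    by (rule plain_count_Suc[OF assms])
  have Z': "\<And>j. obs_of ?s' k j = (if plain_act w x t = k \<and> j = Suc ?n then x k (Suc t) else obs_of ?s k j)"
    by (rule plain_obs_Suc[OF assms])
  consider "plain_act w x t \<noteq> k" | "plain_act w x t = k" "?n < m" | "plain_act w x t = k" "\<not> ?n < m"
    by blast
  then show ?thesis
  proof cases
    case 1
    then show ?thesis using n' Z' by (simp add: hoeffding_process_def centered_sum_def)
  next
    case 2
    then have mn: "min (counts_of ?s' k) m = Suc ?n" "min ?n m = ?n" using n' by auto
    have "(\<Sum>j=1..?n. \<sigma> * (obs_of ?s' k j - mu)) = (\<Sum>j=1..?n. \<sigma> * (obs_of ?s k j - mu))"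
      by (rule sum.cong) (auto simp: Z')
    then have S: "centered_sum k m \<sigma> mu ?s' = centered_sum k m \<sigma> mu ?s + \<sigma> * (x k (Suc t) - mu)"
      unfolding centered_sum_def mn using 2 Z' by simp
    have "hoeffding_process k m \<sigma> mu l ?s' =
        exp (l * centered_sum k m \<sigma> mu ?s - l\<^sup>2 / 8 * real ?n + (l * (\<sigma> * (x k (Suc t) - mu)) - l\<^sup>2 / 8))"
      unfolding hoeffding_process_def S mn by (simp add: algebra_simps)
    then show ?thesis using 2 unfolding hoeffding_process_def mn exp_add by simp
  next
    case 3
    then have mn: "min (counts_of ?s' k) m = m" "min ?n m = m" using n' by auto
    have "centered_sum k m \<sigma> mu ?s' = centered_sum k m \<sigma> mu ?s"
      unfolding centered_sum_def mn using 3 by (intro sum.cong) (auto simp: Z')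
    then show ?thesis using 3 unfolding hoeffding_process_def mn by simp
  qed
qed

lemma measurable_hoeffding_process:
  assumes "measurable_state N s"
  shows "(\<lambda>\<omega>. hoeffding_process k m \<sigma> mu l (s \<omega>)) \<in> borel_measurable N"
proof -
  have "(\<lambda>\<omega>. counts_of (s \<omega>) k) \<in> measurable N (count_space UNIV)"
    using assms unfolding measurable_state_def by blast
  then have n: "(\<lambda>\<omega>. min (counts_of (s \<omega>) k) m) \<in> measurable N (count_space UNIV)"
    by (rule measurable_compose) simp
  have [measurable]: "\<And>j. (\<lambda>\<omega>. obs_of (s \<omega>) k j) \<in> borel_measurable N"
    using assms by (auto simp: measurable_state_def)
  have "(\<lambda>\<omega>. (\<lambda>i \<omega>. exp (l * (\<Sum>j=1..i. \<sigma> * (obs_of (s \<omega>) k j - mu)) - l\<^sup>2 / 8 * real i))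
           (min (counts_of (s \<omega>) k) m) \<omega>) \<in> borel_measurable N"
    by (rule measurable_compose_nat[OF n]) measurable
  then show ?thesis by (simp add: hoeffding_process_def centered_sum_def)
qed

end

context mucb_bandit
begin

lemma hoeffding_mgf_le:
  assumes k: "k \<in> {1..K}" and t: "t \<in> {1..T}" and \<sigma>: "\<bar>\<sigma>\<bar> = 1" and l: "0 < l"
  shows "expectation (\<lambda>\<omega>. exp (l * (\<sigma> * (clamp01 (X k t \<omega>) - \<mu> k)))) \<le> exp (l\<^sup>2 / 8)"
proof -
  have [measurable]: "X k t \<in> borel_measurable M" using rv k t by auto
  interpret bounded: interval_bounded_random_variable M "\<lambda>\<omega>. \<sigma> * X k t \<omega>" "min 0 \<sigma>" "max 0 \<sigma>"
  proof unfold_locales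
    show "random_variable borel (\<lambda>\<omega>. \<sigma> * X k t \<omega>)" by measurable
    show "AE x in M. \<sigma> * X k t x \<in> {min 0 \<sigma>..max 0 \<sigma>}"
    proof (rule AE_I2)
      fix x assume "x \<in> space M"
      then have "X k t x \<in> {0..1}" using range01 k t by auto
      then show "\<sigma> * X k t x \<in> {min 0 \<sigma>..max 0 \<sigma>}" using \<sigma>
        by (cases "\<sigma> \<ge> 0") (auto simp: mult_le_cancel_left1 mult_left_le)
    qed
  qed
  have E: "expectation (\<lambda>\<omega>. \<sigma> * X k t \<omega>) = \<sigma> * \<mu> k" using mean[OF k t] by simp
  have width: "(max 0 \<sigma> - min 0 \<sigma>)\<^sup>2 = 1" using \<sigma> by (cases "\<sigma> \<ge> 0") auto
  have hoeffding:
    "(\<integral>\<^sup>+\<omega>. ennreal (exp (l * (\<sigma> * X k t \<omega> - \<sigma> * \<mu> k))) \<partial>M) \<le> ennreal (exp (l\<^sup>2 / 8))"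
    using bounded.Hoeffdings_lemma_nn_integral[OF l] unfolding E width by simp
  let ?g = "\<lambda>\<omega>. exp (l * (\<sigma> * (clamp01 (X k t \<omega>) - \<mu> k)))"
  have "\<bar>?g \<omega>\<bar> \<le> exp (l * (1 + \<bar>\<mu> k\<bar>))" for \<omega>
    using abs_signed_clamp01_le[OF \<sigma>, of "X k t \<omega>" "\<mu> k"] l by (simp add: mult_left_mono)
  then have "integrable M ?g" by (intro integrable_bounded) measurable
  then have "ennreal (expectation ?g) = (\<integral>\<^sup>+\<omega>. ennreal (?g \<omega>) \<partial>M)"
    by (intro nn_integral_eq_integral[symmetric]) auto
  also have "\<dots> = (\<integral>\<^sup>+\<omega>. ennreal (exp (l * (\<sigma> * X k t \<omega> - \<sigma> * \<mu> k))) \<partial>M)"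
    using range01 k t by (intro nn_integral_cong) (simp add: clamp01_id algebra_simps)
  also have "\<dots> \<le> ennreal (exp (l\<^sup>2 / 8))" by (rule hoeffding)
  finally show ?thesis by (simp add: ennreal_le_iff)
qed

lemma expectation_gated_increment_le:
  fixes B C e :: real
  assumes t: "Suc t \<le> T" and k: "k \<in> {1..K}"
    and V: "V \<in> borel_measurable (PiM (cells t) (\<lambda>_. borel))" "\<And>p. 0 \<le> V p" "\<And>p. V p \<le> B"
    and g: "g \<in> borel_measurable borel" "\<And>y. 0 \<le> g y" "\<And>y. g y \<le> C"
    and e: "e * expectation (\<lambda>\<omega>. g (X k (Suc t) \<omega>)) \<le> 1"
  shows "e * expectation (\<lambda>\<omega>. V (past t \<omega>) * g (X k (Suc t) \<omega>)) \<le> expectation (\<lambda>\<omega>. V (past t \<omega>))"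
proof -
  have "expectation (\<lambda>\<omega>. V (past t \<omega>) * g (X k (Suc t) \<omega>)) =
        expectation (\<lambda>\<omega>. V (past t \<omega>)) * expectation (\<lambda>\<omega>. g (X k (Suc t) \<omega>))"
    using V g by (intro expectation_past_times_present[OF t k, where B=B and C=C]) auto
  moreover have "0 \<le> expectation (\<lambda>\<omega>. V (past t \<omega>))"
    using V(2) by (intro integral_nonneg_AE) auto
  then have "(e * expectation (\<lambda>\<omega>. g (X k (Suc t) \<omega>))) * expectation (\<lambda>\<omega>. V (past t \<omega>))
      \<le> 1 * expectation (\<lambda>\<omega>. V (past t \<omega>))"
    by (rule mult_right_mono[OF e])
  ultimately show ?thesis by (simp add: algebra_simps)
qed

end

context mucb_bandit
begin

lemma integrable_hoeffding_process:
  assumes "\<bar>\<sigma>\<bar> = 1" "0 \<le> l"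
  shows "integrable M (\<lambda>\<omega>. hoeffding_process k m \<sigma> (\<mu> k) l (plain_run w (reward_table \<omega>) t))"
proof (rule integrable_bounded[where B="exp (l * (real m * (1 + \<bar>\<mu> k\<bar>)))"])
  show "(\<lambda>\<omega>. hoeffding_process k m \<sigma> (\<mu> k) l (plain_run w (reward_table \<omega>) t)) \<in> borel_measurable M"
    by (rule measurable_hoeffding_process[OF measurable_state_reward_table])
  show "\<bar>hoeffding_process k m \<sigma> (\<mu> k) l (plain_run w (reward_table \<omega>) t)\<bar>
      \<le> exp (l * (real m * (1 + \<bar>\<mu> k\<bar>)))" for \<omega>
    using hoeffding_process_pos[of k m \<sigma> "\<mu> k" l] assms
    by (simp add: less_imp_le hoeffding_process_le[OF obs_reward_table_in_unit])
qed

text \<open>The value of the Hoeffding process if the observation of round \<open>t + 1\<close> enters it, and \<open>0\<close>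
  otherwise, as a function of the rewards of the first \<open>t\<close> rounds.\<close>

definition gated_weight :: "nat \<Rightarrow> nat \<Rightarrow> real \<Rightarrow> real \<Rightarrow> nat \<Rightarrow> nat \<Rightarrow> (nat \<times> nat \<Rightarrow> real) \<Rightarrow> real" where
  "gated_weight k m \<sigma> l w t p =
     hoeffding_process k m \<sigma> (\<mu> k) l (plain_run w (table_of (cells t) p) t) *
     (if plain_act w (table_of (cells t) p) t = k \<and> counts_of (plain_run w (table_of (cells t) p) t) k < m
      then 1 else 0)"

lemma measurable_gated_weight:
  "gated_weight k m \<sigma> l w t \<in> borel_measurable (PiM (cells t) (\<lambda>_. borel))"
proof -
  have state: "measurable_state (PiM (cells t) (\<lambda>_. borel)) (\<lambda>p. plain_run w (table_of (cells t) p) t)"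
    by (rule measurable_state_table_of)
  have [measurable]: "(\<lambda>p. counts_of (plain_run w (table_of (cells t) p) t) k)
      \<in> measurable (PiM (cells t) (\<lambda>_. borel)) (count_space UNIV)"
    using state by (simp add: measurable_state_def)
  have [measurable]: "(\<lambda>p. plain_act w (table_of (cells t) p) t)
      \<in> measurable (PiM (cells t) (\<lambda>_. borel)) (count_space UNIV)"
    by (rule measurable_action[OF state])
  have [measurable]: "(\<lambda>p. hoeffding_process k m \<sigma> (\<mu> k) l (plain_run w (table_of (cells t) p) t))
      \<in> borel_measurable (PiM (cells t) (\<lambda>_. borel))"
    by (rule measurable_hoeffding_process[OF state])
  show ?thesis unfolding gated_weight_def[abs_def] by measurable
qed

lemma gated_weight_bounds:
  assumes "\<bar>\<sigma>\<bar> = 1" "0 \<le> l"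
  shows "0 \<le> gated_weight k m \<sigma> l w t p" "gated_weight k m \<sigma> l w t p \<le> exp (l * (real m * (1 + \<bar>\<mu> k\<bar>)))"
proof -
  let ?W = "hoeffding_process k m \<sigma> (\<mu> k) l (plain_run w (table_of (cells t) p) t)"
  have "0 < ?W" by (rule hoeffding_process_pos)
  moreover have "?W \<le> exp (l * (real m * (1 + \<bar>\<mu> k\<bar>)))"
    using assms by (intro hoeffding_process_le[OF obs_in_unit[OF unit_rewards_table_of]])
  ultimately show "0 \<le> gated_weight k m \<sigma> l w t p"
    "gated_weight k m \<sigma> l w t p \<le> exp (l * (real m * (1 + \<bar>\<mu> k\<bar>)))"
    by (auto simp: gated_weight_def)
qed

lemma hoeffding_process_reward_table_Suc:
  assumes "k \<in> {1..K}" "Suc t \<le> T"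
  shows "hoeffding_process k m \<sigma> (\<mu> k) l (plain_run w (reward_table \<omega>) (Suc t))
    = hoeffding_process k m \<sigma> (\<mu> k) l (plain_run w (reward_table \<omega>) t) - gated_weight k m \<sigma> l w t (past t \<omega>)
      + exp (- (l\<^sup>2 / 8)) * (gated_weight k m \<sigma> l w t (past t \<omega>) *
                               exp (l * (\<sigma> * (clamp01 (X k (Suc t) \<omega>) - \<mu> k))))"
proof -
  have "reward_table \<omega> k (Suc t) = clamp01 (X k (Suc t) \<omega>)"
    using assms by (simp add: reward_table_def cells_def)
  then show ?thesis
    unfolding hoeffding_process_plain_Suc[OF unit_rewards_reward_table] gated_weight_def
              run_reward_table_eq_past[OF Suc_leD[OF assms(2)]]
    by (simp add: mult_exp_exp)
qed

text \<open>The supermartingale property: the observation entering the process is independent of the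
  gate and has moment generating function at most \<open>exp (l\<^sup>2 / 8)\<close>.\<close>

lemma expectation_hoeffding_process_Suc_le:
  assumes k: "k \<in> {1..K}" and \<sigma>: "\<bar>\<sigma>\<bar> = 1" and l: "0 < l" and t: "Suc t \<le> T"
  shows "expectation (\<lambda>\<omega>. hoeffding_process k m \<sigma> (\<mu> k) l (plain_run w (reward_table \<omega>) (Suc t)))
         \<le> expectation (\<lambda>\<omega>. hoeffding_process k m \<sigma> (\<mu> k) l (plain_run w (reward_table \<omega>) t))"
proof -
  define g where "g y = exp (l * (\<sigma> * (clamp01 y - \<mu> k)))" for y
  define e where "e = exp (- (l\<^sup>2 / 8))"
  let ?W = "\<lambda>\<omega>. hoeffding_process k m \<sigma> (\<mu> k) l (plain_run w (reward_table \<omega>) t)"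
  let ?V = "\<lambda>\<omega>. gated_weight k m \<sigma> l w t (past t \<omega>)" and ?g = "\<lambda>\<omega>. g (X k (Suc t) \<omega>)"
  note V_bounds = gated_weight_bounds[OF \<sigma> less_imp_le[OF l]]
  have g_meas [measurable]: "g \<in> borel_measurable borel" unfolding g_def by measurable
  have g_bounds: "0 \<le> g y" "g y \<le> exp (l * (1 + \<bar>\<mu> k\<bar>))" for y
    unfolding g_def using abs_signed_clamp01_le[OF \<sigma>, of y "\<mu> k"] l by (simp_all add: mult_left_mono)
  have "e * expectation ?g \<le> e * exp (l\<^sup>2 / 8)"
    unfolding e_def g_def by (intro mult_left_mono hoeffding_mgf_le[OF k _ \<sigma> l]) (use t in auto)
  then have e_g: "e * expectation ?g \<le> 1" by (simp add: e_def exp_minus)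
  have [measurable]: "X k (Suc t) \<in> borel_measurable M" using rv k t by auto
  have [measurable]: "?V \<in> borel_measurable M"
    using measurable_comp[OF measurable_past[OF Suc_leD[OF t]] measurable_gated_weight]
    by (simp add: comp_def)
  have "integrable M ?V"
    by (rule integrable_bounded) (use V_bounds in auto)
  moreover have "integrable M (\<lambda>\<omega>. ?V \<omega> * ?g \<omega>)"
    by (rule integrable_bounded[where B="exp (l * (real m * (1 + \<bar>\<mu> k\<bar>))) * exp (l * (1 + \<bar>\<mu> k\<bar>))"])
       (use V_bounds g_bounds in \<open>auto simp: abs_mult intro!: mult_mono\<close>)
  ultimately have "expectation (\<lambda>\<omega>. hoeffding_process k m \<sigma> (\<mu> k) l (plain_run w (reward_table \<omega>) (Suc t)))
      = expectation ?W - expectation ?V + e * expectation (\<lambda>\<omega>. ?V \<omega> * ?g \<omega>)"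
    using integrable_hoeffding_process[OF \<sigma> less_imp_le[OF l]]
    unfolding hoeffding_process_reward_table_Suc[OF k t] e_def g_def by simp
  also have "\<dots> \<le> expectation ?W"
    using expectation_gated_increment_le[OF t k measurable_gated_weight V_bounds g_meas g_bounds e_g]
    by simp
  finally show ?thesis .
qed

lemma expectation_hoeffding_process_le_1:
  assumes "k \<in> {1..K}" "\<bar>\<sigma>\<bar> = 1" "0 < l" "t \<le> T"
  shows "expectation (\<lambda>\<omega>. hoeffding_process k m \<sigma> (\<mu> k) l (plain_run w (reward_table \<omega>) t)) \<le> 1"
  using assms(4)
proof (induction t)
  case 0
  then show ?case by (simp add: hoeffding_process_def centered_sum_def counts_of_def prob_space)
next
  case (Suc t)
  then show ?case
    using expectation_hoeffding_process_Suc_le[OF assms(1-3) Suc.prems] by (meson Suc_leD order.trans)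
qed

definition deviation_event :: "nat \<Rightarrow> nat \<Rightarrow> real \<Rightarrow> nat \<Rightarrow> nat \<Rightarrow> real \<Rightarrow> 'a set" where
  "deviation_event w k \<sigma> t m c = {\<omega> \<in> space M. m \<le> counts_of (plain_run w (reward_table \<omega>) t) k \<and>
      real m * c \<le> \<sigma> * ((\<Sum>j=1..m. obs_of (plain_run w (reward_table \<omega>) t) k j) - real m * \<mu> k)}"

lemma sets_deviation_event [measurable]: "deviation_event w k \<sigma> t m c \<in> sets M"
proof -
  have state: "measurable_state M (\<lambda>\<omega>. plain_run w (reward_table \<omega>) t)"
    by (rule measurable_state_reward_table)
  then have "(\<lambda>\<omega>. counts_of (plain_run w (reward_table \<omega>) t) k) \<in> measurable M (count_space UNIV)"
    by (simp add: measurable_state_def)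
  then have "(\<lambda>\<omega>. m \<le> counts_of (plain_run w (reward_table \<omega>) t) k) \<in> measurable M (count_space UNIV)"
    by (rule measurable_compose) simp
  moreover have [measurable]: "\<And>j. (\<lambda>\<omega>. obs_of (plain_run w (reward_table \<omega>) t) k j) \<in> borel_measurable M"
    using state by (simp add: measurable_state_def)
  ultimately show ?thesis unfolding deviation_event_def by (simp add: pred_def) measurable
qed

lemma prob_deviation_event_le:
  assumes k: "k \<in> {1..K}" and \<sigma>: "\<bar>\<sigma>\<bar> = 1" and t: "t \<le> T" and c: "0 < c"
  shows "prob (deviation_event w k \<sigma> t m c) \<le> exp (- (2 * real m * c\<^sup>2))"
proof -
  define l where "l = 4 * c"
  have l: "0 < l" using c by (simp add: l_def)
  let ?E = "deviation_event w k \<sigma> t m c"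
  let ?W = "\<lambda>\<omega>. hoeffding_process k m \<sigma> (\<mu> k) l (plain_run w (reward_table \<omega>) t)"
  have indicator_le: "exp (2 * real m * c\<^sup>2) * indicator ?E \<omega> \<le> ?W \<omega>" for \<omega>
  proof (cases "\<omega> \<in> ?E")
    case True
    let ?s = "plain_run w (reward_table \<omega>) t"
    have "min (counts_of ?s k) m = m" using True by (auto simp: deviation_event_def)
    moreover have "real m * c \<le> \<sigma> * ((\<Sum>j=1..m. obs_of ?s k j) - real m * \<mu> k)"
      using True by (auto simp: deviation_event_def)
    ultimately have "real m * c \<le> centered_sum k m \<sigma> (\<mu> k) ?s"
      unfolding centered_sum_def by (simp add: sum_distrib_left sum_subtractf algebra_simps)
    then have "2 * real m * c\<^sup>2 \<le> l * centered_sum k m \<sigma> (\<mu> k) ?s - l\<^sup>2 / 8 * real m"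
      using l unfolding l_def by (simp add: power2_eq_square algebra_simps mult_left_mono)
    with \<open>min (counts_of ?s k) m = m\<close> show ?thesis
      using True by (simp add: hoeffding_process_def)
  qed (simp add: hoeffding_process_pos less_imp_le)
  have "integrable M ?W"
    using integrable_hoeffding_process[OF \<sigma>] l by simp
  moreover have "integrable M (\<lambda>\<omega>. exp (2 * real m * c\<^sup>2) * indicator ?E \<omega>)"
    by (intro integrable_mult_right integrable_real_indicator) (auto simp: emeasure_eq_measure)
  ultimately have "expectation (\<lambda>\<omega>. exp (2 * real m * c\<^sup>2) * indicator ?E \<omega>) \<le> expectation ?W"
    by (intro integral_mono indicator_le)
  then have "exp (2 * real m * c\<^sup>2) * prob ?E \<le> expectation ?W"
    by (simp add: Int_absorb2 sets.sets_into_space)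
  also have "\<dots> \<le> 1" by (rule expectation_hoeffding_process_le_1[OF k \<sigma> l t])
  finally show ?thesis by (simp add: exp_minus field_simps)
qed

end

section \<open>Pull counts of a suboptimal arm\<close>

text \<open>If a UCB maximiser \<open>k\<close> has been pulled at least \<open>l \<ge> 8 lt / \<Delta>\<^sup>2\<close> times, then the best arm's
  mean lies below its confidence interval or \<open>k\<close>'s mean lies above its own.\<close>

lemma ucb_order_impossible:
  fixes S1 S2 n1 n2 mus muk lt l c2 :: real
  assumes n1: "1 \<le> n1" and n2: "l \<le> n2" and l: "0 < l" and lt: "0 \<le> lt"
    and gap: "0 < mus - muk" and l_large: "8 * lt / (mus - muk)\<^sup>2 \<le> l"
    and idx: "S1 / n1 + sqrt (2 * lt / n1) \<le> S2 / n2 + sqrt (2 * lt / n2)"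
    and best_ok: "\<not> S1 \<le> n1 * mus - n1 * sqrt (2 * lt / n1)"
    and k_ok: "\<not> n2 * c2 \<le> S2 - n2 * muk" and c2: "c2 = sqrt (2 * lt / n2)"
  shows False
proof -
  have n2_pos: "0 < n2" using n2 l by simp
  let ?c1 = "sqrt (2 * lt / n1)"
  have "n1 * (mus - ?c1) < S1" using best_ok by (simp add: algebra_simps)
  then have "mus - ?c1 < S1 / n1" using n1 by (simp add: field_simps)
  moreover have "S2 < n2 * (muk + c2)" using k_ok by (simp add: algebra_simps)
  then have "S2 / n2 < muk + c2" using n2_pos by (simp add: field_simps)
  ultimately have "mus - muk < 2 * c2" using idx c2 by linarith
  then have "(mus - muk)\<^sup>2 < (2 * c2)\<^sup>2" using gap by (intro power_strict_mono) auto
  also have "(2 * c2)\<^sup>2 = 8 * lt / n2" using c2 lt n2_pos by (simp add: power_mult_distrib)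
  finally have "(mus - muk)\<^sup>2 * n2 < 8 * lt" using n2_pos by (simp add: field_simps)
  moreover have "8 * lt \<le> l * (mus - muk)\<^sup>2" using l_large gap by (simp add: field_simps)
  moreover have "l * (mus - muk)\<^sup>2 \<le> n2 * (mus - muk)\<^sup>2" using n2 by (intro mult_right_mono) auto
  ultimately show False by (simp add: mult.commute)
qed

lemma sum_two_t_div_pow4_le: "(\<Sum>t<T. 2 * real t / (real t + 1) ^ 4) \<le> 1 - 1 / (real T + 1)"
proof (induction T)
  case 0
  then show ?case by simp
next
  case (Suc T)
  have "2 * T * (T + 2) \<le> (T + 1) ^ 3"
    by (simp add: power3_eq_cube algebra_simps, metis le_SucI le_square trans_le_add1)
  then have "2 * real T * (real T + 2) \<le> (real T + 1) ^ 3"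
    by (metis (mono_tags, opaque_lifting) of_nat_1 of_nat_add of_nat_le_iff of_nat_mult
              of_nat_numeral of_nat_power)
  then have "2 * real T * ((real T + 1) * (real T + 2)) \<le> 1 * (real T + 1) ^ 4"
    using mult_right_mono[of _ _ "real T + 1"] by (simp add: power_Suc2 numeral_eq_Suc algebra_simps)
  then have "2 * real T / (real T + 1) ^ 4 \<le> 1 / ((real T + 1) * (real T + 2))"
    by (simp add: frac_le_eq divide_le_eq le_divide_eq)
  also have "\<dots> = 1 / (real T + 1) - 1 / (real (Suc T) + 1)"
    by (simp add: field_simps)
  finally show ?case using Suc by simp
qed

context mucb
begin

lemma plain_ucb_pull_bad_estimate:
  assumes unit: "unit_rewards x (Suc t)" and not_forced: "\<not> forced (Suc t)"
    and pull: "plain_act w x t = k" and ks: "ks \<in> {1..K}" and l1: "1 \<le> l"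
    and many: "l \<le> counts_of (plain_run w x t) k"
    and gap: "0 < mus - muk" and l_large: "8 * ln (real (Suc t)) / (mus - muk)\<^sup>2 \<le> real l"
  defines "n \<equiv> counts_of (plain_run w x t)" and "Z \<equiv> obs_of (plain_run w x t)"
    and "c \<equiv> \<lambda>i. sqrt (2 * ln (real (Suc t)) / real (counts_of (plain_run w x t) i))"
  shows "(1 \<le> n ks \<and> sum (Z ks) {1..n ks} \<le> real (n ks) * mus - real (n ks) * c ks) \<or>
         (real (n k) * c k \<le> sum (Z k) {1..n k} - real (n k) * muk)"
proof (rule ccontr)
  assume no_bad: "\<not> ?thesis"
  have argmax: "k \<in> ucb_argmax K n Z 0 (Suc t)"
    using plain_act_ucb[OF unit_rewards_mono[OF unit] not_forced, where w=w] pull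
    by (simp add: n_def Z_def)
  have "1 \<le> n k" using l1 many by (simp add: n_def)
  have no_zero: "\<not> (\<exists>k'\<in>{1..K}. n k' = 0)"
  proof
    assume "\<exists>k'\<in>{1..K}. n k' = 0"
    then have "n k = 0" using argmax by (auto simp: ucb_argmax_def)
    with \<open>1 \<le> n k\<close> show False by simp
  qed
  then have "1 \<le> n ks" using ks by (metis less_one not_le)
  moreover have "ucb_index n Z 0 (Suc t) ks \<le> ucb_index n Z 0 (Suc t) k"
    using argmax ks unfolding ucb_argmax_def if_not_P[OF no_zero] by auto
  ultimately show False
    using no_bad many l1 l_large gap
    by (intro ucb_order_impossible[of "real (n ks)" "real l" "real (n k)" "ln (real (Suc t))" mus muk
          "sum (Z ks) {1..n ks}" "sum (Z k) {1..n k}" "c k"])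
       (auto simp: ucb_index_def c_def n_def)
qed

lemma card_forced_pulls_le:
  assumes "unit_rewards x T"
  shows "card {t \<in> {..<T}. plain_act w x t = k \<and> forced (Suc t)} \<le> T div period + 1"
proof -
  let ?S = "{t \<in> {..<T}. plain_act w x t = k \<and> forced (Suc t)}"
  have "Suc ` ?S \<subseteq> {r \<in> {1..T}. r mod period = k}"
    using plain_act_forced[OF unit_rewards_mono[OF assms]] by auto
  then have "card (Suc ` ?S) \<le> card {r \<in> {1..T}. r mod period = k}"
    by (intro card_mono) auto
  also have "\<dots> \<le> T div period + 1" by (rule card_residue_class_le[OF period_pos])
  finally show ?thesis by (simp add: card_image)
qed

end

context mucb_bandit
begin

definition conf_radius :: "nat \<Rightarrow> nat \<Rightarrow> real" where
  "conf_radius t m = sqrt (2 * ln (real (Suc t)) / real m)"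

definition bad_round :: "nat \<Rightarrow> nat \<Rightarrow> nat \<Rightarrow> nat \<Rightarrow> 'a set" where
  "bad_round w k ks t =
     (\<Union>m\<in>{1..t}. deviation_event w ks (-1) t m (conf_radius t m)) \<union>
     (\<Union>m\<in>{1..t}. deviation_event w k 1 t m (conf_radius t m))"

lemma sets_bad_round [measurable]: "bad_round w k ks t \<in> sets M"
  unfolding bad_round_def by measurable

lemma prob_deviation_event_conf_radius_le:
  assumes k: "k \<in> {1..K}" and \<sigma>: "\<bar>\<sigma>\<bar> = 1" and t: "t \<le> T" and m: "m \<in> {1..t}"
  shows "prob (deviation_event w k \<sigma> t m (conf_radius t m)) \<le> 1 / (real t + 1) ^ 4"
proof -
  have ln_pos: "0 < ln (real (Suc t))" using m by simp
  then have "0 < conf_radius t m" unfolding conf_radius_def using m by simp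
  then have "prob (deviation_event w k \<sigma> t m (conf_radius t m)) \<le> exp (- (2 * real m * (conf_radius t m)\<^sup>2))"
    by (rule prob_deviation_event_le[OF k \<sigma> t])
  also have "2 * real m * (conf_radius t m)\<^sup>2 = 4 * ln (real (Suc t))"
    unfolding conf_radius_def using ln_pos m by simp
  also have "exp (4 * ln (real (Suc t))) = exp (ln (real (Suc t) ^ 4))"
    by (simp add: ln_realpow)
  then have "exp (4 * ln (real (Suc t))) = (real t + 1) ^ 4" by (simp add: add.commute)
  then have "exp (- (4 * ln (real (Suc t)))) = 1 / (real t + 1) ^ 4"
    by (simp add: exp_minus divide_inverse add.commute)
  finally show ?thesis .
qed

lemma prob_bad_round_le:
  assumes k: "k \<in> {1..K}" and ks: "ks \<in> {1..K}" and t: "t \<le> T"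
  shows "prob (bad_round w k ks t) \<le> 2 * real t / (real t + 1) ^ 4"
proof -
  have union_le: "prob (\<Union>m\<in>{1..t}. deviation_event w k' \<sigma> t m (conf_radius t m)) \<le> real t / (real t + 1) ^ 4"
    if "k' \<in> {1..K}" "\<bar>\<sigma>\<bar> = 1" for k' \<sigma>
  proof -
    have "prob (\<Union>m\<in>{1..t}. deviation_event w k' \<sigma> t m (conf_radius t m))
        \<le> (\<Sum>m\<in>{1..t}. prob (deviation_event w k' \<sigma> t m (conf_radius t m)))"
      by (rule finite_measure_subadditive_finite) auto
    also have "\<dots> \<le> (\<Sum>m\<in>{1..t}. 1 / (real t + 1) ^ 4)"
      by (intro sum_mono prob_deviation_event_conf_radius_le[OF that t])
    finally show ?thesis by simp
  qed
  have "prob (bad_round w k ks t)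
      \<le> prob (\<Union>m\<in>{1..t}. deviation_event w ks (-1) t m (conf_radius t m))
        + prob (\<Union>m\<in>{1..t}. deviation_event w k 1 t m (conf_radius t m))"
    unfolding bad_round_def by (rule measure_Un_le) auto
  then show ?thesis using union_le[OF ks, of "-1"] union_le[OF k, of 1] by simp
qed

definition pulls :: "nat \<Rightarrow> nat \<Rightarrow> 'a \<Rightarrow> real" where
  "pulls w k \<omega> = (\<Sum>t<T. if plain_act w (reward_table \<omega>) t = k then 1 else 0)"

lemma unforced_pull_in_bad_round:
  assumes \<omega>: "\<omega> \<in> space M" and ks: "ks \<in> {1..K}" and l1: "1 \<le> l" and t: "t < T"
    and pull: "plain_act w (reward_table \<omega>) t = k" and not_forced: "\<not> forced (Suc t)"
    and many: "l \<le> counts_of (plain_run w (reward_table \<omega>) t) k"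
    and gap: "0 < \<mu> ks - \<mu> k" and l_large: "8 * ln (real T) / (\<mu> ks - \<mu> k)\<^sup>2 \<le> real l"
  shows "\<omega> \<in> bad_round w k ks t"
proof -
  let ?s = "plain_run w (reward_table \<omega>) t"
  have "8 * ln (real (Suc t)) / (\<mu> ks - \<mu> k)\<^sup>2 \<le> 8 * ln (real T) / (\<mu> ks - \<mu> k)\<^sup>2"
    using t gap by (intro divide_right_mono) auto
  then have "8 * ln (real (Suc t)) / (\<mu> ks - \<mu> k)\<^sup>2 \<le> real l" using l_large by linarith
  from plain_ucb_pull_bad_estimate[OF unit_rewards_reward_table not_forced pull ks l1 many gap this]
  consider
      "1 \<le> counts_of ?s ks" "sum (obs_of ?s ks) {1..counts_of ?s ks}
         \<le> real (counts_of ?s ks) * \<mu> ks - real (counts_of ?s ks) * conf_radius t (counts_of ?s ks)"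
    | "real (counts_of ?s k) * conf_radius t (counts_of ?s k)
         \<le> sum (obs_of ?s k) {1..counts_of ?s k} - real (counts_of ?s k) * \<mu> k"
    unfolding conf_radius_def by blast
  then show ?thesis
  proof cases
    case 1
    then have "counts_of ?s ks \<in> {1..t}" using count_le[of w "real w" _ t ks] by auto
    moreover have "\<omega> \<in> deviation_event w ks (-1) t (counts_of ?s ks) (conf_radius t (counts_of ?s ks))"
      using 1 \<omega> unfolding deviation_event_def by (auto simp: algebra_simps)
    ultimately show ?thesis unfolding bad_round_def by blast
  next
    case 2
    have "counts_of ?s k \<in> {1..t}" using count_le[of w "real w" _ t k] many l1 by auto
    moreover have "\<omega> \<in> deviation_event w k 1 t (counts_of ?s k) (conf_radius t (counts_of ?s k))"
      using 2 \<omega> unfolding deviation_event_def by auto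
    ultimately show ?thesis unfolding bad_round_def by blast
  qed
qed

lemma pulls_le:
  assumes \<omega>: "\<omega> \<in> space M" and ks: "ks \<in> {1..K}" and l1: "1 \<le> l"
    and gap: "0 < \<mu> ks - \<mu> k" and l_large: "8 * ln (real T) / (\<mu> ks - \<mu> k)\<^sup>2 \<le> real l"
  shows "pulls w k \<omega> \<le> real l + real (T div period + 1) + (\<Sum>t<T. indicator (bad_round w k ks t) \<omega>)"
proof -
  let ?x = "reward_table \<omega>"
  let ?n = "\<lambda>t. counts_of (plain_run w ?x t) k"
  define S1 where "S1 = {t \<in> {..<T}. plain_act w ?x t = k \<and> ?n t < l}"
  define S2 where "S2 = {t \<in> {..<T}. plain_act w ?x t = k \<and> forced (Suc t)}"
  define S3 where "S3 = {t \<in> {..<T}. \<omega> \<in> bad_round w k ks t}"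
  have "{t \<in> {..<T}. plain_act w ?x t = k} \<subseteq> S1 \<union> S2 \<union> S3"
  proof
    fix t assume "t \<in> {t \<in> {..<T}. plain_act w ?x t = k}"
    then have t: "t < T" and pull: "plain_act w ?x t = k" by auto
    show "t \<in> S1 \<union> S2 \<union> S3"
    proof (cases "?n t < l \<or> forced (Suc t)")
      case True
      then show ?thesis using t pull by (auto simp: S1_def S2_def)
    next
      case False
      then have "\<omega> \<in> bad_round w k ks t"
        by (intro unforced_pull_in_bad_round[OF \<omega> ks l1 t pull _ _ gap l_large]) auto
      then show ?thesis using t by (simp add: S3_def)
    qed
  qed
  then have "card {t \<in> {..<T}. plain_act w ?x t = k} \<le> card (S1 \<union> S2 \<union> S3)"
    by (intro card_mono) (auto simp: S1_def S2_def S3_def)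
  also have "\<dots> \<le> card S1 + card S2 + card S3"
    by (intro order.trans[OF card_Un_le] add_right_mono card_Un_le)
  also have "card S1 \<le> l"
    using card_pulls_below_le[OF unit_rewards_reward_table order.refl, where w=w and k=k and l=l] by (simp add: S1_def)
  also have "card S2 \<le> T div period + 1"
    unfolding S2_def by (rule card_forced_pulls_le[OF unit_rewards_reward_table])
  finally have "real (card {t \<in> {..<T}. plain_act w ?x t = k}) \<le> real l + real (T div period + 1) + card S3"
    by linarith
  moreover have "real (card S3) = (\<Sum>t<T. indicator (bad_round w k ks t) \<omega>)"
    unfolding S3_def by (simp add: sum.inter_filter[symmetric] indicator_def Collect_conj_eq lessThan_def)
  moreover have "pulls w k \<omega> = real (card {t \<in> {..<T}. plain_act w ?x t = k})"
    unfolding pulls_def by (simp add: sum.inter_filter[symmetric])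
  ultimately show ?thesis by simp
qed

lemma measurable_pulls [measurable]: "pulls w k \<in> borel_measurable M"
proof -
  have [measurable]: "\<And>t. (\<lambda>\<omega>. plain_act w (reward_table \<omega>) t) \<in> measurable M (count_space UNIV)"
    by (rule measurable_act)
  show ?thesis unfolding pulls_def by measurable
qed

lemma integrable_pulls: "integrable M (pulls w k)"
proof (rule integrable_bounded[where B="real T", OF measurable_pulls])
  fix \<omega>
  have "0 \<le> pulls w k \<omega>" unfolding pulls_def by (intro sum_nonneg) auto
  moreover have "pulls w k \<omega> \<le> (\<Sum>t<T. 1)" unfolding pulls_def by (intro sum_mono) auto
  ultimately show "\<bar>pulls w k \<omega>\<bar> \<le> real T" by simp
qed

lemma expected_pulls_le:
  assumes ks: "ks \<in> {1..K}" and k: "k \<in> {1..K}" and l1: "1 \<le> l"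
    and gap: "0 < \<mu> ks - \<mu> k" and l_large: "8 * ln (real T) / (\<mu> ks - \<mu> k)\<^sup>2 \<le> real l"
  shows "expectation (pulls w k) \<le> real l + real (T div period) + 2"
proof -
  let ?bound = "\<lambda>\<omega>. real l + real (T div period + 1) + (\<Sum>t<T. indicator (bad_round w k ks t) \<omega>)"
  have indicator_integrable: "integrable M (\<lambda>\<omega>. indicator (bad_round w k ks t) \<omega> :: real)" for t
    by (intro integrable_real_indicator) (auto simp: emeasure_eq_measure)
  then have "integrable M ?bound" by auto
  then have "expectation (pulls w k) \<le> expectation ?bound"
    by (intro integral_mono integrable_pulls pulls_le[OF _ ks l1 gap l_large])
  also have "expectation ?bound = real l + real (T div period + 1) + (\<Sum>t<T. prob (bad_round w k ks t))"
    using indicator_integrable by (simp add: prob_space Int_absorb2 sets.sets_into_space)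
  also have "(\<Sum>t<T. prob (bad_round w k ks t)) \<le> (\<Sum>t<T. 2 * real t / (real t + 1) ^ 4)"
    by (intro sum_mono prob_bad_round_le[OF k ks]) simp
  also have "\<dots> \<le> 1"
    using sum_two_t_div_pow4_le[of T] by (smt (verit) divide_nonneg_nonneg of_nat_0_le_iff)
  finally show ?thesis by simp
qed

end

section \<open>The regret bound\<close>

lemma sum_indicator_mult_eq:
  fixes f :: "nat \<Rightarrow> real"
  assumes "finite A" "a \<in> A"
  shows "(\<Sum>k\<in>A. (if a = k then 1 else 0) * f k) = f a"
  using assms by (simp add: if_distrib[of "\<lambda>c. c * _"] sum.delta cong: if_cong)

context mucb_bandit
begin

lemma measurable_indicator_act:
  "(\<lambda>\<omega>. if act w b (reward_table \<omega>) t = k then 1 else 0 :: real) \<in> borel_measurable M"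
  using measurable_compose[OF measurable_act, of "\<lambda>a. if a = k then 1 else 0 :: real"] by simp

lemma integrable_indicator_act_times_X:
  assumes "k \<in> {1..K}" "s < T"
  shows "integrable M (\<lambda>\<omega>. (if act w b (reward_table \<omega>) s = k then 1 else 0) * X k (Suc s) \<omega>)"
proof (rule integrable_bounded[where B=1])
  have "X k (Suc s) \<in> borel_measurable M" using rv assms by auto
  then show "(\<lambda>\<omega>. (if act w b (reward_table \<omega>) s = k then 1 else 0) * X k (Suc s) \<omega>) \<in> borel_measurable M"
    using measurable_indicator_act by measurable
  show "\<bar>(if act w b (reward_table \<omega>) s = k then 1 else 0) * X k (Suc s) \<omega>\<bar> \<le> 1"
    if "\<omega> \<in> space M" for \<omega>
    using range01[OF assms(1) _ that, of "Suc s"] assms by auto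
qed

lemma expectation_pull_times_reward:
  assumes k: "k \<in> {1..K}" and s: "s < T"
  shows "expectation (\<lambda>\<omega>. (if act w b (reward_table \<omega>) s = k then 1 else 0) * X k (Suc s) \<omega>)
         = expectation (\<lambda>\<omega>. if act w b (reward_table \<omega>) s = k then 1 else 0) * \<mu> k"
proof -
  define F where "F p = (if act w b (table_of (cells s) p) s = k then 1 else 0 :: real)" for p
  have "(\<lambda>p. act w b (table_of (cells s) p) s) \<in> measurable (PiM (cells s) (\<lambda>_. borel)) (count_space UNIV)"
    by (rule measurable_action[OF measurable_state_table_of])
  then have F_meas: "F \<in> borel_measurable (PiM (cells s) (\<lambda>_. borel))"
    unfolding F_def using measurable_compose[of _ _ _ "\<lambda>a. if a = k then 1 else 0 :: real" borel]
    by simp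
  have past: "(if act w b (reward_table \<omega>) s = k then 1 else 0) = F (past s \<omega>)" for \<omega>
    unfolding F_def run_reward_table_eq_past[OF less_imp_le[OF s]] ..
  have clamp: "\<omega> \<in> space M \<Longrightarrow> clamp01 (X k (Suc s) \<omega>) = X k (Suc s) \<omega>" for \<omega>
    using range01 k s by (auto intro: clamp01_id)
  have "expectation (\<lambda>\<omega>. (if act w b (reward_table \<omega>) s = k then 1 else 0) * X k (Suc s) \<omega>)
      = expectation (\<lambda>\<omega>. F (past s \<omega>) * clamp01 (X k (Suc s) \<omega>))"
    by (rule Bochner_Integration.integral_cong) (auto simp: past clamp)
  also have "\<dots> = expectation (\<lambda>\<omega>. F (past s \<omega>)) * expectation (\<lambda>\<omega>. clamp01 (X k (Suc s) \<omega>))"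
    using s by (intro expectation_past_times_present[OF _ k F_meas, where B=1 and C=1])
               (auto simp: F_def clamp01_def)
  also have "expectation (\<lambda>\<omega>. clamp01 (X k (Suc s) \<omega>)) = \<mu> k"
    using mean[of k "Suc s"] k s by (simp add: clamp cong: Bochner_Integration.integral_cong)
  finally show ?thesis by (simp add: past)
qed

lemma expectation_reward_of_action:
  assumes s: "s < T"
  shows "expectation (\<lambda>\<omega>. X (act w b (reward_table \<omega>) s) (Suc s) \<omega>)
         = expectation (\<lambda>\<omega>. \<mu> (act w b (reward_table \<omega>) s))"
proof -
  let ?ind = "\<lambda>k \<omega>. if act w b (reward_table \<omega>) s = k then 1 else 0 :: real"
  have "expectation (\<lambda>\<omega>. X (act w b (reward_table \<omega>) s) (Suc s) \<omega>)
      = expectation (\<lambda>\<omega>. \<Sum>k\<in>{1..K}. ?ind k \<omega> * X k (Suc s) \<omega>)"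
    by (simp only: sum_indicator_mult_eq[OF _ action_in_arms] finite_atLeastAtMost)
  also have "\<dots> = (\<Sum>k\<in>{1..K}. expectation (\<lambda>\<omega>. ?ind k \<omega> * X k (Suc s) \<omega>))"
    using integrable_indicator_act_times_X s by (intro Bochner_Integration.integral_sum) auto
  also have "\<dots> = (\<Sum>k\<in>{1..K}. expectation (?ind k) * \<mu> k)"
    using expectation_pull_times_reward s by (intro sum.cong) auto
  also have "\<dots> = expectation (\<lambda>\<omega>. \<Sum>k\<in>{1..K}. ?ind k \<omega> * \<mu> k)"
    using measurable_indicator_act
    by (subst Bochner_Integration.integral_sum) (auto intro: integrable_bounded[where B=1])
  also have "\<dots> = expectation (\<lambda>\<omega>. \<mu> (act w b (reward_table \<omega>) s))"
    by (simp only: sum_indicator_mult_eq[OF _ action_in_arms] finite_atLeastAtMost)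
  finally show ?thesis .
qed

lemma integrable_reward_of_action:
  assumes "s < T"
  shows "integrable M (\<lambda>\<omega>. X (act w b (reward_table \<omega>) s) (Suc s) \<omega>)"
proof -
  have "integrable M (\<lambda>\<omega>. \<Sum>k\<in>{1..K}. (if act w b (reward_table \<omega>) s = k then 1 else 0) * X k (Suc s) \<omega>)"
    using integrable_indicator_act_times_X assms by auto
  then show ?thesis by (simp only: sum_indicator_mult_eq[OF _ action_in_arms] finite_atLeastAtMost)
qed

lemma expected_total_reward:
  "expectation (\<lambda>\<omega>. \<Sum>t=1..T. X (mucb_arm K w b \<gamma> tb (\<lambda>k s. X k s \<omega>) t) t \<omega>)
   = (\<Sum>s<T. expectation (\<lambda>\<omega>. \<mu> (act w b (reward_table \<omega>) s)))"
proof -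
  have "(\<Sum>t=1..T. X (mucb_arm K w b \<gamma> tb (\<lambda>k s. X k s \<omega>) t) t \<omega>)
      = (\<Sum>s<T. X (act w b (reward_table \<omega>) s) (Suc s) \<omega>)" if "\<omega> \<in> space M" for \<omega>
  proof -
    have "mucb_arm K w b \<gamma> tb (\<lambda>k s. X k s \<omega>) (Suc s) = act w b (reward_table \<omega>) s" if "s < T" for s
      unfolding mucb_arm_def using run_eq_run_reward_table[of s \<omega> w b] \<open>\<omega> \<in> space M\<close> that by simp
    then show ?thesis
      by (simp add: sum.atLeast1_atMost_eq)
  qed
  then have "expectation (\<lambda>\<omega>. \<Sum>t=1..T. X (mucb_arm K w b \<gamma> tb (\<lambda>k s. X k s \<omega>) t) t \<omega>)
      = expectation (\<lambda>\<omega>. \<Sum>s<T. X (act w b (reward_table \<omega>) s) (Suc s) \<omega>)"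
    by (intro Bochner_Integration.integral_cong) auto
  also have "\<dots> = (\<Sum>s<T. expectation (\<lambda>\<omega>. X (act w b (reward_table \<omega>) s) (Suc s) \<omega>))"
    by (intro Bochner_Integration.integral_sum integrable_reward_of_action) simp
  also have "\<dots> = (\<Sum>s<T. expectation (\<lambda>\<omega>. \<mu> (act w b (reward_table \<omega>) s)))"
    by (intro sum.cong expectation_reward_of_action) auto
  finally show ?thesis .
qed

end

context mucb_bandit
begin

definition best_mean :: real where "best_mean = Max (\<mu> ` {1..K})"

definition gap :: "nat \<Rightarrow> real" where "gap k = best_mean - \<mu> k"

lemma best_arm_exists:
  obtains ks where "ks \<in> {1..K}" "\<mu> ks = best_mean"
proof -
  have "finite (\<mu> ` {1..K})" "\<mu> ` {1..K} \<noteq> {}" using K_pos by auto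
  from Max_in[OF this] show thesis using that unfolding best_mean_def by auto
qed

lemma gap_nonneg: "k \<in> {1..K} \<Longrightarrow> 0 \<le> gap k"
  unfolding gap_def best_mean_def by (simp add: Max_ge)

lemma gap_le_1:
  assumes "1 \<le> T" "k \<in> {1..K}"
  shows "gap k \<le> 1"
proof -
  obtain ks where ks: "ks \<in> {1..K}" "\<mu> ks = best_mean" by (rule best_arm_exists)
  have "0 \<le> \<mu> k" "\<mu> ks \<le> 1" using mean_in_unit[OF assms] mean_in_unit[OF assms(1) ks(1)] by auto
  then show ?thesis using ks(2) by (simp add: gap_def)
qed

lemma integrable_fun_of_act:
  fixes f :: "nat \<Rightarrow> real"
  shows "integrable M (\<lambda>\<omega>. f (act w b (reward_table \<omega>) s))"
proof (rule integrable_bounded[where B="\<Sum>k\<in>{1..K}. \<bar>f k\<bar>"])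
  show "(\<lambda>\<omega>. f (act w b (reward_table \<omega>) s)) \<in> borel_measurable M"
    by (rule measurable_compose[OF measurable_act]) simp
  show "\<bar>f (act w b (reward_table \<omega>) s)\<bar> \<le> (\<Sum>k\<in>{1..K}. \<bar>f k\<bar>)" for \<omega>
    using action_in_arms by (intro member_le_sum) auto
qed

lemma regret_eq_expected_gaps:
  "(\<Sum>t=1..T. best_mean) - expectation (\<lambda>\<omega>. \<Sum>t=1..T. X (mucb_arm K w b \<gamma> tb (\<lambda>k s. X k s \<omega>) t) t \<omega>)
   = expectation (\<lambda>\<omega>. \<Sum>s<T. gap (act w b (reward_table \<omega>) s))"
proof -
  have "expectation (\<lambda>\<omega>. \<Sum>s<T. gap (act w b (reward_table \<omega>) s))
      = (\<Sum>s<T. expectation (\<lambda>\<omega>. gap (act w b (reward_table \<omega>) s)))"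
    by (intro Bochner_Integration.integral_sum integrable_fun_of_act)
  also have "\<dots> = (\<Sum>s<T. best_mean - expectation (\<lambda>\<omega>. \<mu> (act w b (reward_table \<omega>) s)))"
    unfolding gap_def using integrable_fun_of_act by (simp add: prob_space)
  finally show ?thesis unfolding expected_total_reward by (simp add: sum_subtractf)
qed

lemma detection_event_eq:
  "{\<omega> \<in> space M. mucb_tau1 K w b \<gamma> tb (\<lambda>k s. X k s \<omega>) \<le> enat T}
   = {\<omega> \<in> space M. detection_of (run w b (reward_table \<omega>) T) \<noteq> None}"
  unfolding tau1_le_iff using run_eq_run_reward_table[of T _ w b] by auto

lemma sets_detection_event:
  "{\<omega> \<in> space M. mucb_tau1 K w b \<gamma> tb (\<lambda>k s. X k s \<omega>) \<le> enat T} \<in> sets M"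
proof -
  have "(\<lambda>\<omega>. detection_of (run w b (reward_table \<omega>) T)) \<in> measurable M (count_space UNIV)"
    using measurable_state_reward_table[of w b T] by (simp add: measurable_state_def)
  then have "Measurable.pred M (\<lambda>\<omega>. detection_of (run w b (reward_table \<omega>) T) \<noteq> None)"
    by (intro pred_intros_logic pred_count_space_const1)
  then show ?thesis unfolding detection_event_eq by measurable
qed

text \<open>Before the first detection M-UCB and the plain run play the same arms; afterwards the
  per-round regret is at most \<open>1\<close>.\<close>

lemma expected_gaps_le_detection_plus_plain:
  fixes w :: nat and b :: real
  assumes "1 \<le> T"
  defines "D \<equiv> {\<omega> \<in> space M. mucb_tau1 K w b \<gamma> tb (\<lambda>k s. X k s \<omega>) \<le> enat T}"
  shows "expectation (\<lambda>\<omega>. \<Sum>s<T. gap (act w b (reward_table \<omega>) s))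
         \<le> real T * prob D + expectation (\<lambda>\<omega>. \<Sum>s<T. gap (plain_act w (reward_table \<omega>) s))"
proof -
  let ?R = "\<lambda>\<omega>. \<Sum>s<T. gap (act w b (reward_table \<omega>) s)"
  let ?R' = "\<lambda>\<omega>. \<Sum>s<T. gap (plain_act w (reward_table \<omega>) s)"
  have D[measurable]: "D \<in> sets M" unfolding D_def by (rule sets_detection_event)
  have pointwise: "?R \<omega> \<le> real T * indicator D \<omega> + ?R' \<omega>" if \<omega>: "\<omega> \<in> space M" for \<omega>
  proof (cases "\<omega> \<in> D")
    case True
    have "?R \<omega> \<le> (\<Sum>s<T. 1)" by (intro sum_mono gap_le_1[OF assms(1)] action_in_arms)
    moreover have "0 \<le> ?R' \<omega>" by (intro sum_nonneg gap_nonneg action_in_arms)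
    ultimately show ?thesis using True by simp
  next
    case False
    then have "detection_of (run w b (reward_table \<omega>) T) = None"
      using \<omega> detection_event_eq unfolding D_def by auto
    then have "detection_of (run w b (reward_table \<omega>) s) = None" if "s < T" for s
      using that detection_mono[of s T w b "reward_table \<omega>"] by (meson less_imp_le)
    then have "run w b (reward_table \<omega>) s = plain_run w (reward_table \<omega>) s" if "s < T" for s
      using that by (intro run_eq_plain_run_before_detection[OF unit_rewards_reward_table])
    then have "?R \<omega> = ?R' \<omega>" by simp
    then show ?thesis using False by simp
  qed
  have integrable_D: "integrable M (\<lambda>\<omega>. real T * indicator D \<omega> :: real)"
    by (intro integrable_mult_right integrable_real_indicator) (auto simp: emeasure_eq_measure)
  have "expectation ?R \<le> expectation (\<lambda>\<omega>. real T * indicator D \<omega> + ?R' \<omega>)"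
    using integrable_D integrable_fun_of_act pointwise by (intro integral_mono) auto
  also have "\<dots> = real T * prob D + expectation ?R'"
    using integrable_D integrable_fun_of_act by (simp add: Int_absorb2 sets.sets_into_space)
  finally show ?thesis .
qed

lemma expected_plain_gaps_eq:
  "expectation (\<lambda>\<omega>. \<Sum>s<T. gap (plain_act w (reward_table \<omega>) s))
   = (\<Sum>k\<in>{1..K}. gap k * expectation (pulls w k))"
proof -
  have "(\<Sum>s<T. gap (plain_act w (reward_table \<omega>) s)) = (\<Sum>k\<in>{1..K}. gap k * pulls w k \<omega>)" for \<omega>
  proof -
    have "(\<Sum>s<T. gap (plain_act w (reward_table \<omega>) s))
        = (\<Sum>s<T. \<Sum>k\<in>{1..K}. (if plain_act w (reward_table \<omega>) s = k then 1 else 0) * gap k)"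
      by (simp only: sum_indicator_mult_eq[OF _ action_in_arms] finite_atLeastAtMost)
    also have "\<dots> = (\<Sum>k\<in>{1..K}. gap k * pulls w k \<omega>)"
      unfolding pulls_def by (subst sum.swap) (simp add: sum_distrib_left mult.commute)
    finally show ?thesis .
  qed
  then show ?thesis using integrable_pulls by (simp add: Bochner_Integration.integral_sum)
qed

lemma gap_times_expected_pulls_le:
  assumes T: "1 \<le> T" and k: "k \<in> {1..K}"
  shows "gap k * expectation (pulls w k)
         \<le> (if 0 < gap k then 8 * (ln (real T) / gap k) else 0) + 3 * gap k + gap k * real (T div period)"
proof (cases "0 < gap k")
  case False
  then show ?thesis using gap_nonneg[OF k] by simp
next
  case True
  obtain ks where ks: "ks \<in> {1..K}" "\<mu> ks = best_mean" by (rule best_arm_exists)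
  define y where "y = 8 * ln (real T) / (gap k)\<^sup>2"
  have "0 \<le> y" unfolding y_def using T by simp
  define l where "l = max 1 (nat \<lceil>y\<rceil>)"
  have "y \<le> real l" "real l \<le> y + 1"
    unfolding l_def using \<open>0 \<le> y\<close> by (auto simp: max_def) linarith+
  have "expectation (pulls w k) \<le> real l + real (T div period) + 2"
    using \<open>y \<le> real l\<close> True ks
    by (intro expected_pulls_le[OF ks(1) k]) (auto simp: l_def y_def gap_def)
  then have "gap k * expectation (pulls w k) \<le> gap k * (y + 3 + real (T div period))"
    using \<open>real l \<le> y + 1\<close> True by (intro mult_left_mono) auto
  also have "gap k * y = 8 * (ln (real T) / gap k)"
    unfolding y_def using True by (simp add: power2_eq_square field_simps)
  then have "gap k * (y + 3 + real (T div period)) = 8 * (ln (real T) / gap k) + 3 * gap k + gap k * real (T div period)"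
    by (simp add: algebra_simps)
  finally show ?thesis using True by simp
qed

lemma sum_gap_le:
  assumes "1 \<le> T"
  shows "(\<Sum>k\<in>{1..K}. gap k) \<le> real K - 1"
proof -
  obtain ks where ks: "ks \<in> {1..K}" "\<mu> ks = best_mean" by (rule best_arm_exists)
  have "(\<Sum>k\<in>{1..K}. gap k) = gap ks + (\<Sum>k\<in>{1..K} - {ks}. gap k)"
    using ks(1) by (simp add: sum.remove)
  also have "\<dots> \<le> 0 + (\<Sum>k\<in>{1..K} - {ks}. 1)"
    using ks gap_le_1[OF assms] by (intro add_mono sum_mono) (auto simp: gap_def)
  also have "\<dots> = real K - 1" using ks(1) by (simp add: of_nat_diff)
  finally show ?thesis .
qed

lemma sum_gap_times_forced_le:
  assumes "1 \<le> T"
  shows "(\<Sum>k\<in>{1..K}. gap k) * real (T div period) \<le> \<gamma> * real T"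
proof -
  have period: "0 < real period" using period_pos by simp
  have "real (T div period) * real period \<le> real T"
    by (metis of_nat_le_iff of_nat_mult div_times_less_eq_dividend)
  then have "real (T div period) \<le> real T / real period" using period by (simp add: le_divide_eq)
  then have "(\<Sum>k\<in>{1..K}. gap k) * real (T div period) \<le> (real K - 1) * (real T / real period)"
    using sum_gap_le[OF assms] gap_nonneg K_pos by (intro mult_mono sum_nonneg) auto
  also have "\<dots> \<le> (\<gamma> * real period) * (real T / real period)"
    using K_minus_1_le_gamma_period by (intro mult_right_mono) auto
  also have "\<dots> = \<gamma> * real T" using period by simp
  finally show ?thesis .
qed

text \<open>The argument gives the constant \<open>3\<close> in front of \<open>\<Sum>\<^sub>k \<Delta>\<^sub>k\<close>, which is below \<open>1 + \<pi>\<^sup>2/3 + K\<close>.\<close>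

theorem regret_bound:
  "(\<Sum>t=1..T. best_mean) - expectation (\<lambda>\<omega>. \<Sum>t=1..T. X (mucb_arm K w b \<gamma> tb (\<lambda>k s. X k s \<omega>) t) t \<omega>)
   \<le> real T * prob {\<omega> \<in> space M. mucb_tau1 K w b \<gamma> tb (\<lambda>k s. X k s \<omega>) \<le> enat T}
     + (8 * (\<Sum>k\<in>{k\<in>{1..K}. 0 < gap k}. ln (real T) / gap k)
        + (1 + pi\<^sup>2 / 3 + real K) * (\<Sum>k\<in>{1..K}. gap k))
     + \<gamma> * real T"
proof (cases "T = 0")
  case True
  have "0 \<le> (1 + pi\<^sup>2 / 3 + real K) * (\<Sum>k\<in>{1..K}. gap k)"
    using gap_nonneg by (intro mult_nonneg_nonneg sum_nonneg add_nonneg_nonneg) auto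
  then show ?thesis using True by simp
next
  case False
  then have T: "1 \<le> T" by simp
  let ?SD = "\<Sum>k\<in>{1..K}. gap k"
  have "3 \<le> 1 + pi\<^sup>2 / 3 + real K"
    using pi_gt3 mult_strict_mono[OF pi_gt3 pi_gt3] by (simp add: power2_eq_square)
  then have "3 * ?SD \<le> (1 + pi\<^sup>2 / 3 + real K) * ?SD"
    using gap_nonneg by (intro mult_right_mono sum_nonneg) auto
  moreover have "(\<Sum>k\<in>{1..K}. gap k * expectation (pulls w k))
      \<le> (\<Sum>k\<in>{1..K}. (if 0 < gap k then 8 * (ln (real T) / gap k) else 0)
                        + 3 * gap k + gap k * real (T div period))"
    by (intro sum_mono gap_times_expected_pulls_le[OF T])
  moreover have "(\<Sum>k\<in>{1..K}. if 0 < gap k then 8 * (ln (real T) / gap k) else 0)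
      = 8 * (\<Sum>k\<in>{k\<in>{1..K}. 0 < gap k}. ln (real T) / gap k)"
    by (simp add: sum.inter_filter[symmetric] sum_distrib_left)
  ultimately have "(\<Sum>k\<in>{1..K}. gap k * expectation (pulls w k))
      \<le> 8 * (\<Sum>k\<in>{k\<in>{1..K}. 0 < gap k}. ln (real T) / gap k) + (1 + pi\<^sup>2 / 3 + real K) * ?SD
        + ?SD * real (T div period)"
    by (simp add: sum.distrib sum_distrib_left sum_distrib_right)
  then show ?thesis
    using expected_gaps_le_detection_plus_plain[OF T, of w b] sum_gap_times_forced_le[OF T]
    unfolding regret_eq_expected_gaps expected_plain_gaps_eq by linarith
qed

end

theorem lemma1:
  fixes M :: "'a measure"
    and X :: "nat \<Rightarrow> nat \<Rightarrow> 'a \<Rightarrow> real"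
    and \<mu> :: "nat \<Rightarrow> real"
    and K T w :: nat and b \<gamma> :: real
    and tb :: "nat \<Rightarrow> nat set \<Rightarrow> nat"
  assumes "prob_space M"
    and "K \<ge> 1"
    and rv: "\<And>k t. k \<in> {1..K} \<Longrightarrow> t \<in> {1..T} \<Longrightarrow> X k t \<in> borel_measurable M"
    and range01: "\<And>k t \<omega>. k \<in> {1..K} \<Longrightarrow> t \<in> {1..T} \<Longrightarrow> \<omega> \<in> space M \<Longrightarrow> X k t \<omega> \<in> {0..1}"
    and indep: "prob_space.indep_vars M (\<lambda>_. borel) (\<lambda>(k, t). X k t) ({1..K} \<times> {1..T})"
    and stationary: "\<And>k t. k \<in> {1..K} \<Longrightarrow> t \<in> {1..T} \<Longrightarrow> distr M borel (X k t) = distr M borel (X k 1)"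
    and mean: "\<And>k t. k \<in> {1..K} \<Longrightarrow> t \<in> {1..T} \<Longrightarrow> \<mu> k = prob_space.expectation M (X k t)"
    and "even w" and "w > 0" and "b > 0" and "0 < \<gamma>" and "\<gamma> \<le> 1"
    and tb: "\<And>t S. S \<noteq> {} \<Longrightarrow> S \<subseteq> {1..K} \<Longrightarrow> tb t S \<in> S"
  shows "(\<Sum>t=1..T. Max (\<mu> ` {1..K}))
           - prob_space.expectation M
               (\<lambda>\<omega>. \<Sum>t=1..T. X (mucb_arm K w b \<gamma> tb (\<lambda>k s. X k s \<omega>) t) t \<omega>)
         \<le> real T * measure M {\<omega> \<in> space M. mucb_tau1 K w b \<gamma> tb (\<lambda>k s. X k s \<omega>) \<le> enat T}
           + (8 * (\<Sum>k\<in>{k\<in>{1..K}. Max (\<mu> ` {1..K}) - \<mu> k > 0}. ln (real T) / (Max (\<mu> ` {1..K}) - \<mu> k))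
              + (1 + pi\<^sup>2 / 3 + real K) * (\<Sum>k=1..K. Max (\<mu> ` {1..K}) - \<mu> k))
           + \<gamma> * real T"
proof -
  interpret mucb_bandit K \<gamma> tb M X T \<mu>
    by (intro mucb_bandit.intro mucb.intro mucb_bandit_axioms.intro)
       (fact assms(1,2,11,12) tb rv range01 indep mean)+
  show ?thesis using regret_bound unfolding gap_def best_mean_def .
qed

end
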